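(* Let $\Omega\subset\mathbb R^2$ be a domain, $u\in SBV(\Omega)$ a local minimizer of the Mumford--Shah problem, and suppose $0\in\overline{S}_u$ is a tip point. Let $r_3:=\frac12\operatorname{dist}(0,\partial\Omega)$ and let $J\ge1$ be the absolute constant described in the context. Then there exist $C=C(J)>0$, $N=N(J)\in\mathbb N$ and $J'=J'(J)>0$ such that for every $0<r<r_3/9$, the set $B_r\setminus\overline{S}_u$ is covered by the closures of at most $N$ $J'$-John domains $W_{j,r}\subset B_{Cr}\setminus\overline{S}_u$, $1\le j\le N$. Moreover, there is a constant $C_2=C_2(J)>0$ such that for each $j$ and every $x\in W_{j,r}$ there is a rectifiable curve $\beta_x\subset W_{j,r}$ joining $x$ to a point $w_{j,r}\in\partial B_{3r}\cap W_{j,r}$ which is the core of a $J'$-carrot and satisfies $\ell(\beta_x)\le C_2 r$.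
   Context: $B_r$ is the open disk of radius $r$ centered at $0$. $S_u$ is the approximate discontinuity set of $u\in BV(\Omega)$; $SBV(\Omega)$ consists of $u\in BV(\Omega)$ whose singular derivative is the jump part $(u_+-u_-)\nu_u\mathcal H^1\llcorner S_u$. With $MS(u,U)=\int_U|Du|^2dx+\mathcal H^1(S_u\cap U)$, $u\in SBV_{loc}(\Omega)$ is a local minimizer if for every ball $B_\rho(z)\subset\Omega$ and every open $U\subset\subset\Omega\cap B_\rho(z)$, $MS(u,U)<\infty$ and $MS(u,U)\le MS(v,U)$ whenever $\{u\neq v\}\subset\subset U$. A tip point is a point of $\overline{S}_u\setminus S_u$. The constant $J$ is the absolute constant (from a known result of David) with the property: for every $x\in\Omega\setminus\overline S_u$ and every $0<\rho\le\frac12\operatorname{dist}(x,\partial\Omega)$ there is an arc $\gamma\subset\Omega\setminus\overline S_u$ starting at $x$ and leaving $B_\rho(x)$ such that $\ell(\gamma[x,y])\le J\operatorname{dist}(y,\overline S_u)$ for all $y\in\gamma$. A bounded domain $W$ is $J'$-John with center $x_0$ if every $x\in W$ is joined to $x_0$ by an arc $\gamma\subset W$ with $\ell(\gamma[x,y])\le J'\operatorname{dist}(y,\partial W)$ for all $y\in\gamma$. For a curve $\gamma$ from $x$ to $x_0$, the $J'$-carrot with vertex $x$ and core $\gamma$ is $car(\gamma,J')=\bigcup\{B(y,\ell(\gamma[x,y])/J'):y\in\gamma\setminus\{x\}\}$; "$\beta_x$ is the core of a $J'$-carrot" means $car(\beta_x,J')\subset W_{j,r}$. *)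

theory Defs
  imports "HOL-Analysis.Analysis"
begin

type_synonym pt = "real^2"

definition partitions01 :: "(nat \<times> (nat \<Rightarrow> real)) set" where
  "partitions01 = {(n, t). t 0 = 0 \<and> t n = 1 \<and> (\<forall>i<n. t i \<le> t (Suc i))}"

definition path_length :: "(real \<Rightarrow> pt) \<Rightarrow> ennreal" where
  "path_length g = (SUP p \<in> partitions01.
      ennreal (\<Sum>i<fst p. dist (g (snd p (Suc i))) (g (snd p i))))"

text \<open>one-dimensional Hausdorff (outer) measure, normalised so that H^1 = length\<close>
definition hausdorff1 :: "pt set \<Rightarrow> ennreal" where
  "hausdorff1 A = (SUP \<delta> \<in> {0<..}.
      INF C \<in> {C :: nat \<Rightarrow> pt set. A \<subseteq> \<Union>(range C) \<and>
                 (\<forall>i. bounded (C i) \<and> diameter (C i) \<le> \<delta>)}.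
        (\<Sum>i. ennreal (diameter (C i))))"

definition hausdorff1_measure :: "pt measure" where
  "hausdorff1_measure = measure_of UNIV (sets borel) hausdorff1"

definition ball_avg :: "(pt \<Rightarrow> real) \<Rightarrow> pt \<Rightarrow> real \<Rightarrow> real \<Rightarrow> real" where
  "ball_avg u x z r = (LINT y:ball x r|lborel. \<bar>u y - z\<bar>) / measure lborel (ball x r)"

definition approx_disc :: "pt set \<Rightarrow> (pt \<Rightarrow> real) \<Rightarrow> pt set" where
  "approx_disc U u = {x \<in> U. \<not> (\<exists>z. ((ball_avg u x z) \<longlongrightarrow> 0) (at_right 0))}"

text \<open>x is an approximate jump point with value a on the side where (y-x).nu > 0
  (the trace u^+) and b on the other side (u^-)\<close>
definition approx_jump :: "(pt \<Rightarrow> real) \<Rightarrow> pt \<Rightarrow> real \<Rightarrow> real \<Rightarrow> pt \<Rightarrow> bool" where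
  "approx_jump u x a b \<nu> \<longleftrightarrow> a \<noteq> b \<and> norm \<nu> = 1 \<and>
     ((\<lambda>r. (LINT y:{y \<in> ball x r. (y - x) \<bullet> \<nu> > 0}|lborel. \<bar>u y - a\<bar>)
            / measure lborel {y \<in> ball x r. (y - x) \<bullet> \<nu> > 0}) \<longlongrightarrow> 0) (at_right 0) \<and>
     ((\<lambda>r. (LINT y:{y \<in> ball x r. (y - x) \<bullet> \<nu> < 0}|lborel. \<bar>u y - b\<bar>)
            / measure lborel {y \<in> ball x r. (y - x) \<bullet> \<nu> < 0}) \<longlongrightarrow> 0) (at_right 0)"

definition jump_set :: "pt set \<Rightarrow> (pt \<Rightarrow> real) \<Rightarrow> pt set" where
  "jump_set U u = {x \<in> U. \<exists>a b \<nu>. approx_jump u x a b \<nu>}"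

text \<open>(u^+ - u^-) nu_u, well defined on the jump set\<close>
definition jump_vec :: "(pt \<Rightarrow> real) \<Rightarrow> pt \<Rightarrow> pt" where
  "jump_vec u x = (THE v. \<exists>a b \<nu>. approx_jump u x a b \<nu> \<and> v = (a - b) *\<^sub>R \<nu>)"

definition test_fun :: "pt set \<Rightarrow> (pt \<Rightarrow> real) \<Rightarrow> (pt \<Rightarrow> pt) \<Rightarrow> bool" where
  "test_fun U \<phi> D\<phi> \<longleftrightarrow> (\<forall>x. (\<phi> has_derivative (\<lambda>h. D\<phi> x \<bullet> h)) (at x)) \<and>
     continuous_on UNIV D\<phi> \<and> compact (closure {x. \<phi> x \<noteq> 0}) \<and> closure {x. \<phi> x \<noteq> 0} \<subseteq> U"

text \<open>Du = g L^2 + (u^+ - u^-) nu_u H^1 restricted to the jump set, with g in L^1 and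
  finite jump part (so Du is a finite measure: u in BV, and D^s u is the jump part)\<close>
definition sbv_decomp :: "pt set \<Rightarrow> (pt \<Rightarrow> real) \<Rightarrow> (pt \<Rightarrow> pt) \<Rightarrow> bool" where
  "sbv_decomp U u g \<longleftrightarrow>
     (\<forall>i. set_integrable lborel U (\<lambda>x. g x $ i)) \<and>
     set_integrable hausdorff1_measure (jump_set U u) (\<lambda>x. norm (jump_vec u x)) \<and>
     (\<forall>\<phi> D\<phi>. test_fun U \<phi> D\<phi> \<longrightarrow> (\<forall>i.
        (LINT x:U|lborel. u x * D\<phi> x $ i) =
          - (LINT x:U|lborel. g x $ i * \<phi> x)
          - (LINT x:jump_set U u|hausdorff1_measure. jump_vec u x $ i * \<phi> x)))"

definition sbv :: "pt set \<Rightarrow> (pt \<Rightarrow> real) \<Rightarrow> bool" where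
  "sbv U u \<longleftrightarrow> u \<in> borel_measurable lborel \<and> set_integrable lborel U u \<and> (\<exists>g. sbv_decomp U u g)"

definition sbv_loc :: "pt set \<Rightarrow> (pt \<Rightarrow> real) \<Rightarrow> bool" where
  "sbv_loc \<Omega> u \<longleftrightarrow> (\<forall>U. open U \<and> compact (closure U) \<and> closure U \<subseteq> \<Omega> \<longrightarrow> sbv U u)"

text \<open>absolutely continuous part of Du (approximate gradient), defined a.e.\<close>
definition sbv_grad :: "pt set \<Rightarrow> (pt \<Rightarrow> real) \<Rightarrow> pt \<Rightarrow> pt" where
  "sbv_grad U u = (SOME g. sbv_decomp U u g)"

definition MS :: "(pt \<Rightarrow> real) \<Rightarrow> pt set \<Rightarrow> ennreal" where
  "MS u U = (\<integral>\<^sup>+x\<in>U. ennreal ((norm (sbv_grad U u x))\<^sup>2) \<partial>lborel) + hausdorff1 (approx_disc U u \<inter> U)"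

definition MS_local_minimizer :: "pt set \<Rightarrow> (pt \<Rightarrow> real) \<Rightarrow> bool" where
  "MS_local_minimizer \<Omega> u \<longleftrightarrow> sbv_loc \<Omega> u \<and>
     (\<forall>z \<rho> U. ball z \<rho> \<subseteq> \<Omega> \<and> open U \<and> compact (closure U) \<and> closure U \<subseteq> \<Omega> \<inter> ball z \<rho> \<longrightarrow>
        MS u U < \<infinity> \<and>
        (\<forall>v. sbv_loc \<Omega> v \<and> compact (closure {x. u x \<noteq> v x}) \<and> closure {x. u x \<noteq> v x} \<subseteq> U
              \<longrightarrow> MS u U \<le> MS v U))"

definition david_property :: "pt set \<Rightarrow> pt set \<Rightarrow> real \<Rightarrow> bool" where
  "david_property \<Omega> K J \<longleftrightarrow>
     (\<forall>x \<in> \<Omega> - K. \<forall>\<rho>. 0 < \<rho> \<and> \<rho> \<le> infdist x (frontier \<Omega>) / 2 \<longrightarrow>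
        (\<exists>\<gamma>. arc \<gamma> \<and> pathstart \<gamma> = x \<and> path_image \<gamma> \<subseteq> \<Omega> - K \<and>
              \<not> path_image \<gamma> \<subseteq> ball x \<rho> \<and>
              (\<forall>t\<in>{0..1}. path_length (subpath 0 t \<gamma>) \<le> ennreal (J * infdist (\<gamma> t) K))))"

definition john_domain :: "pt set \<Rightarrow> real \<Rightarrow> pt \<Rightarrow> bool" where
  "john_domain W J' x0 \<longleftrightarrow> open W \<and> connected W \<and> bounded W \<and> x0 \<in> W \<and>
     (\<forall>x \<in> W. x = x0 \<or> (\<exists>\<gamma>. arc \<gamma> \<and> pathstart \<gamma> = x \<and> pathfinish \<gamma> = x0 \<and> path_image \<gamma> \<subseteq> W \<and>
        (\<forall>t\<in>{0..1}. path_length (subpath 0 t \<gamma>) \<le> ennreal (J' * infdist (\<gamma> t) (frontier W)))))"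

definition carrot :: "(real \<Rightarrow> pt) \<Rightarrow> real \<Rightarrow> pt set" where
  "carrot \<beta> J' = \<Union> {ball (\<beta> t) (enn2real (path_length (subpath 0 t \<beta>)) / J') | t.
                        t \<in> {0<..1} \<and> \<beta> t \<noteq> pathstart \<beta>}"

end

theory Submission
  imports Defs
begin

text \<open>From every \<open>x \<in> B\<^sub>r - K\<close>, \<open>K = closure S\<^sub>u\<close>, David's property gives an arc along which the
  length travelled never exceeds \<open>J\<close> times the distance to \<open>K\<close>. Stopped at its first exit from
  the closed ball of radius \<open>3r\<close>, it ends on the sphere \<open>\<partial>B\<^sub>3\<^sub>r\<close> at distance at least \<open>2r/J\<close>
  from \<open>K\<close>. Sorting these end points into grid squares of side \<open>r/J\<close> leaves at most
  \<open>(2\<lceil>3J\<rceil> + 1)\<^sup>2\<close> clusters. Within a cluster, the stopped arcs together with the segments from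
  their end points to one fixed end point \<open>y\<^sub>0\<close> form a spine: from each of its points, follow its
  own arc until it first meets the segment, then the segment; this is a \<open>(3J\<^sup>2 + 2)\<close>-carrot arc
  to \<open>y\<^sub>0\<close>, because the segment stays at distance \<open>\<ge> r/J\<close> from \<open>K\<close>. The union of the balls
  \<open>B(p, dist(p, K)/2)\<close> over the spine lies in \<open>B\<^sub>5\<^sub>r - K\<close>, and a point of it reaches \<open>y\<^sub>0\<close> by going
  straight to the centre \<open>p\<close> of its ball until it first meets the spine arc of \<open>p\<close>; distances to
  the frontier are comparable to distances to \<open>K\<close> along the way, which makes the union a John
  domain.\<close>

section \<open>Length bounds for curves on subintervals\<close>

definition variation_le :: "(real \<Rightarrow> 'a::metric_space) \<Rightarrow> real \<Rightarrow> real \<Rightarrow> real \<Rightarrow> bool" where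
  "variation_le f a b B \<longleftrightarrow> (\<forall>n s. s 0 = a \<and> s n = b \<and> (\<forall>i<n. s i \<le> s (Suc i)) \<longrightarrow>
      (\<Sum>i<n. dist (f (s (Suc i))) (f (s i))) \<le> B)"

lemma partition_point_bounds:
  fixes s :: "nat \<Rightarrow> real"
  assumes "\<forall>i<n. s i \<le> s (Suc i)" "i \<le> n"
  shows "s 0 \<le> s i" "s i \<le> s n"
proof -
  have "s j \<le> s k" if "j \<le> k" "k \<le> n" for j k
  proof (rule lift_Suc_mono_le_ivl[of "{..<n}"])
    show "{j..<k} \<subseteq> {..<n}" using that by auto
  qed (use assms(1) that in simp_all)
  then show "s 0 \<le> s i" "s i \<le> s n" using assms(2) by auto
qed

lemma variation_leD:
  assumes "variation_le f a b B" "s 0 = a" "s n = b" "\<forall>i<n. s i \<le> s (Suc i)"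
  shows "(\<Sum>i<n. dist (f (s (Suc i))) (f (s i))) \<le> B"
  using assms unfolding variation_le_def by blast

lemma variation_le_mono: "variation_le f a b B \<Longrightarrow> B \<le> B' \<Longrightarrow> variation_le f a b B'"
  unfolding variation_le_def using order_trans by blast

lemma variation_le_dist:
  assumes "variation_le f a b B" "a \<le> b"
  shows "dist (f a) (f b) \<le> B"
proof -
  define s :: "nat \<Rightarrow> real" where "s i = (if i = 0 then a else b)" for i
  have "(\<Sum>i<1. dist (f (s (Suc i))) (f (s i))) \<le> B"
    by (rule variation_leD[OF assms(1)]) (use assms(2) in \<open>auto simp: s_def\<close>)
  then show ?thesis by (simp add: s_def dist_commute)
qed

lemma variation_le_nonneg: "variation_le f a b B \<Longrightarrow> a \<le> b \<Longrightarrow> 0 \<le> B"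
  using variation_le_dist zero_le_dist order_trans by metis

lemma variation_le_refl:
  assumes "0 \<le> B" shows "variation_le f a a B"
  unfolding variation_le_def
proof (intro allI impI)
  fix n and s :: "nat \<Rightarrow> real"
  assume s: "s 0 = a \<and> s n = a \<and> (\<forall>i<n. s i \<le> s (Suc i))"
  then have "s i = a" if "i \<le> n" for i
    using partition_point_bounds[of n s i] that by fastforce
  then show "(\<Sum>i<n. dist (f (s (Suc i))) (f (s i))) \<le> B"
    using assms by simp
qed

lemma variation_le_reparam:
  assumes mono: "\<And>x y. a \<le> x \<Longrightarrow> x \<le> y \<Longrightarrow> y \<le> b \<Longrightarrow> \<phi> x \<le> \<phi> y"
    and "variation_le f (\<phi> a) (\<phi> b) B"
  shows "variation_le (\<lambda>x. f (\<phi> x)) a b B"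
  unfolding variation_le_def
proof (intro allI impI)
  fix n and s :: "nat \<Rightarrow> real"
  assume s: "s 0 = a \<and> s n = b \<and> (\<forall>i<n. s i \<le> s (Suc i))"
  then have "\<forall>i<n. \<phi> (s i) \<le> \<phi> (s (Suc i))"
    using partition_point_bounds[of n s] by (metis Suc_leI less_imp_le_nat mono)
  then show "(\<Sum>i<n. dist (f (\<phi> (s (Suc i)))) (f (\<phi> (s i)))) \<le> B"
    using variation_leD[OF assms(2), of "\<lambda>i. \<phi> (s i)" n] s by simp
qed

lemma variation_le_cong:
  assumes "\<And>x. a \<le> x \<Longrightarrow> x \<le> b \<Longrightarrow> f x = g x" "variation_le f a b B"
  shows "variation_le g a b B"
  unfolding variation_le_def
proof (intro allI impI)
  fix n and s :: "nat \<Rightarrow> real"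
  assume s: "s 0 = a \<and> s n = b \<and> (\<forall>i<n. s i \<le> s (Suc i))"
  then have "f (s i) = g (s i)" if "i \<le> n" for i
    using partition_point_bounds[of n s i] that assms(1) by simp
  then have "(\<Sum>i<n. dist (g (s (Suc i))) (g (s i))) = (\<Sum>i<n. dist (f (s (Suc i))) (f (s i)))"
    by (intro sum.cong) auto
  then show "(\<Sum>i<n. dist (g (s (Suc i))) (g (s i))) \<le> B"
    using variation_leD[OF assms(2)] s by simp
qed

lemma dist_linepath: "dist (linepath p q x) (linepath p q y) = \<bar>x - y\<bar> * dist p q"
proof -
  have "linepath p q x - linepath p q y = (x - y) *\<^sub>R (q - p)"
    by (simp add: linepath_def algebra_simps)
  then show ?thesis by (simp add: dist_norm norm_minus_commute)
qed

lemma variation_le_linepath: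
  assumes "u \<le> v"
  shows "variation_le (linepath p q) u v ((v - u) * dist p q)"
  unfolding variation_le_def
proof (intro allI impI)
  fix n and s :: "nat \<Rightarrow> real"
  assume s: "s 0 = u \<and> s n = v \<and> (\<forall>i<n. s i \<le> s (Suc i))"
  then have "(\<Sum>i<n. dist (linepath p q (s (Suc i))) (linepath p q (s i))) = (\<Sum>i<n. s (Suc i) - s i) * dist p q"
    by (simp add: dist_linepath sum_distrib_right)
  also have "\<dots> = (v - u) * dist p q" using s by (simp add: sum_lessThan_telescope)
  finally show "(\<Sum>i<n. dist (linepath p q (s (Suc i))) (linepath p q (s i))) \<le> (v - u) * dist p q"
    by simp
qed

lemma variation_le_drop_left:
  assumes "a \<le> a'" "variation_le f a b B"
  shows "variation_le f a' b (B - dist (f a') (f a))"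
  unfolding variation_le_def
proof (intro allI impI)
  fix n and s :: "nat \<Rightarrow> real"
  assume s: "s 0 = a' \<and> s n = b \<and> (\<forall>i<n. s i \<le> s (Suc i))"
  define s' where "s' i = (if i = 0 then a else s (i - 1))" for i
  have mono: "\<forall>i<Suc n. s' i \<le> s' (Suc i)"
    using s assms(1) by (auto simp: s'_def less_Suc_eq_0_disj)
  have "s' 0 = a" "s' (Suc n) = b" using s by (simp_all add: s'_def)
  then have "(\<Sum>i<Suc n. dist (f (s' (Suc i))) (f (s' i))) \<le> B"
    using variation_leD[OF assms(2) _ _ mono] by blast
  moreover have "(\<Sum>i<Suc n. dist (f (s' (Suc i))) (f (s' i))) =
      dist (f a') (f a) + (\<Sum>i<n. dist (f (s (Suc i))) (f (s i)))"
    by (subst sum.lessThan_Suc_shift) (simp add: s'_def s)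
  ultimately show "(\<Sum>i<n. dist (f (s (Suc i))) (f (s i))) \<le> B - dist (f a') (f a)"
    by simp
qed

lemma variation_le_shrink_left:
  assumes "a \<le> a'" "variation_le f a b B"
  shows "variation_le f a' b B"
  using variation_le_drop_left[OF assms] by (rule variation_le_mono) simp

lemma partition_sum_le_split:
  assumes "s 0 = a" "s n = c" "\<forall>i<n. s i \<le> s (Suc i)" "a \<le> b" "b \<le> c"
    and "variation_le f a b B1" "variation_le f b c B2"
  shows "(\<Sum>i<n. dist (f (s (Suc i))) (f (s i))) \<le> B1 + B2"
  using assms
proof (induction n arbitrary: a s B1)
  case 0
  then have "a = b" "b = c" by auto
  then show ?case
    using variation_le_nonneg[OF "0.prems"(6)] variation_le_nonneg[OF "0.prems"(7)] by simp
next
  case (Suc n)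
  let ?t = "\<lambda>i. s (Suc i)"
  have sum_eq: "(\<Sum>i<Suc n. dist (f (s (Suc i))) (f (s i))) =
      dist (f (s 1)) (f a) + (\<Sum>i<n. dist (f (?t (Suc i))) (f (?t i)))"
    by (subst sum.lessThan_Suc_shift) (simp add: Suc.prems(1))
  have "a \<le> s 1" "s 1 \<le> c"
    using partition_point_bounds[OF Suc.prems(3), of 1] Suc.prems(1,2) by auto
  show ?case
  proof (cases "s 1 \<le> b")
    case True
    have "variation_le f (s 1) b (B1 - dist (f (s 1)) (f a))"
      using variation_le_drop_left[OF \<open>a \<le> s 1\<close> Suc.prems(6)] .
    then have "(\<Sum>i<n. dist (f (?t (Suc i))) (f (?t i))) \<le> (B1 - dist (f (s 1)) (f a)) + B2"
      using Suc.prems True by (intro Suc.IH[of "?t" "s 1"]) simp_all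
    then show ?thesis using sum_eq by simp
  next
    case False
    \<comment> \<open>the first step crosses \<open>b\<close>: split it there by the triangle inequality\<close>
    have "b \<le> s 1" using False by simp
    then have "variation_le f (s 1) c (B2 - dist (f (s 1)) (f b))"
      using Suc.prems(7) by (rule variation_le_drop_left)
    then have "(\<Sum>i<n. dist (f (?t (Suc i))) (f (?t i))) \<le> B2 - dist (f (s 1)) (f b)"
      using Suc.prems(2,3) by (intro variation_leD[where s = ?t and n = n]) auto
    moreover have "dist (f (s 1)) (f a) \<le> dist (f (s 1)) (f b) + B1"
      using dist_triangle[of "f (s 1)" "f a" "f b"] variation_le_dist[OF Suc.prems(6,4)]
      by (simp add: dist_commute)
    ultimately show ?thesis using sum_eq by simp
  qed
qed

lemma variation_le_split:
  assumes "a \<le> b" "b \<le> c" "variation_le f a b B1" "variation_le f b c B2"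
  shows "variation_le f a c (B1 + B2)"
  unfolding variation_le_def using partition_sum_le_split[OF _ _ _ assms] by simp

lemma variation_le_subpath:
  assumes "u \<le> v" "variation_le g ((v - u) * a + u) ((v - u) * b + u) B"
  shows "variation_le (subpath u v g) a b B"
  unfolding subpath_def
  by (rule variation_le_reparam[of a b "\<lambda>x. (v - u) * x + u", OF _ assms(2)])
    (use assms(1) in \<open>simp add: mult_left_mono\<close>)

lemma variation_le_joinpaths_left:
  assumes "0 \<le> t" "t \<le> 1/2" "variation_le g 0 (2 * t) B"
  shows "variation_le (g +++ h) 0 t B"
proof -
  have "variation_le (\<lambda>x. g (2 * x)) 0 t B"
    using variation_le_reparam[of 0 t "\<lambda>x. 2 * x" g B] assms by simp
  then show ?thesis
    by (rule variation_le_cong[rotated]) (use assms in \<open>simp add: joinpaths_def\<close>)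
qed

lemma variation_le_joinpaths_right:
  assumes "1/2 \<le> t" "pathfinish g = pathstart h"
    and "variation_le g 0 1 B1" "variation_le h 0 (2 * t - 1) B2"
  shows "variation_le (g +++ h) 0 t (B1 + B2)"
proof (rule variation_le_split[of 0 "1/2"])
  show "variation_le (g +++ h) 0 (1/2) B1"
    using variation_le_joinpaths_left[of "1/2" g B1 h] assms by simp
  have "variation_le (\<lambda>x. h (2 * x - 1)) (1/2) t B2"
    using variation_le_reparam[of "1/2" t "\<lambda>x. 2 * x - 1" h B2] assms by simp
  moreover have "h (2 * x - 1) = (g +++ h) x" if "1/2 \<le> x" for x
  proof (cases "x = 1/2")
    case True
    show ?thesis using assms(2) unfolding True by (simp add: joinpaths_def pathfinish_def pathstart_def)
  qed (use that in \<open>simp add: joinpaths_def\<close>)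
  ultimately show "variation_le (g +++ h) (1/2) t B2"
    using variation_le_cong[of "1/2" t "\<lambda>x. h (2 * x - 1)" "g +++ h"] by simp
qed (use assms in auto)

lemma path_length_le_iff:
  assumes "0 \<le> B"
  shows "path_length g \<le> ennreal B \<longleftrightarrow> variation_le g 0 1 B"
proof
  assume len: "path_length g \<le> ennreal B"
  show "variation_le g 0 1 B"
    unfolding variation_le_def
  proof (intro allI impI)
    fix n and s :: "nat \<Rightarrow> real"
    assume "s 0 = 0 \<and> s n = 1 \<and> (\<forall>i<n. s i \<le> s (Suc i))"
    then have "(n, s) \<in> partitions01" unfolding partitions01_def by auto
    then have "ennreal (\<Sum>i<n. dist (g (s (Suc i))) (g (s i))) \<le> path_length g"
      unfolding path_length_def by (rule SUP_upper2) auto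
    then have "ennreal (\<Sum>i<n. dist (g (s (Suc i))) (g (s i))) \<le> ennreal B"
      using len by (rule order_trans)
    then show "(\<Sum>i<n. dist (g (s (Suc i))) (g (s i))) \<le> B"
      using ennreal_le_iff[OF assms] by blast
  qed
next
  assume var: "variation_le g 0 1 B"
  show "path_length g \<le> ennreal B"
    unfolding path_length_def
  proof (rule SUP_least)
    fix p assume "p \<in> partitions01"
    then obtain n s where "p = (n, s)" "s 0 = 0" "s n = 1" "\<forall>i<n. s i \<le> s (Suc i)"
      unfolding partitions01_def by auto
    then show "ennreal (\<Sum>i<fst p. dist (g (snd p (Suc i))) (g (snd p i))) \<le> ennreal B"
      using variation_leD[OF var] by (simp add: ennreal_leI)
  qed
qed

lemma path_length_subpath_le_iff:
  assumes "0 \<le> B" "0 \<le> t"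
  shows "path_length (subpath 0 t g) \<le> ennreal B \<longleftrightarrow> variation_le g 0 t B"
  unfolding path_length_le_iff[OF assms(1)]
proof
  assume "variation_le (subpath 0 t g) 0 1 B"
  show "variation_le g 0 t B"
  proof (cases "t = 0")
    case True
    then show ?thesis using variation_le_refl assms(1) by simp
  next
    case False
    have "variation_le (\<lambda>x. subpath 0 t g (x / t)) 0 t B"
      using variation_le_reparam[of 0 t "\<lambda>x. x / t" "subpath 0 t g" B]
        \<open>variation_le (subpath 0 t g) 0 1 B\<close> False assms(2)
      by (simp add: divide_right_mono)
    moreover have "(\<lambda>x. subpath 0 t g (x / t)) = g" using False by (simp add: subpath_def)
    ultimately show ?thesis by simp
  qed
qed (rule variation_le_subpath, use assms(2) in simp_all)

section \<open>Carrot curves\<close>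

text \<open>The condition \<open>\<ell>(\<gamma>[x,y]) \<le> c dist(y, K)\<close> shared by David's property and by John domains
  (where \<open>K\<close> is the frontier).\<close>
definition carrot_curve :: "real \<Rightarrow> 'a::metric_space set \<Rightarrow> (real \<Rightarrow> 'a) \<Rightarrow> bool" where
  "carrot_curve c K g \<longleftrightarrow> (\<forall>t\<in>{0..1}. variation_le g 0 t (c * infdist (g t) K))"

lemma carrot_curve_iff_path_length:
  assumes "0 \<le> c"
  shows "carrot_curve c K g \<longleftrightarrow>
    (\<forall>t\<in>{0..1}. path_length (subpath 0 t g) \<le> ennreal (c * infdist (g t) K))"
  unfolding carrot_curve_def
proof (rule ball_cong[OF refl])
  fix t :: real assume "t \<in> {0..1}"
  moreover have "0 \<le> c * infdist (g t) K" using assms by (simp add: infdist_nonneg)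
  ultimately show "variation_le g 0 t (c * infdist (g t) K) \<longleftrightarrow>
      path_length (subpath 0 t g) \<le> ennreal (c * infdist (g t) K)"
    using path_length_subpath_le_iff[of "c * infdist (g t) K" t g] by simp
qed

lemma carrot_curve_le:
  assumes "carrot_curve c' K' g" "\<And>t. t \<in> {0..1} \<Longrightarrow> c' * infdist (g t) K' \<le> c * infdist (g t) K"
  shows "carrot_curve c K g"
  using assms variation_le_mono unfolding carrot_curve_def by blast

lemma carrot_curve_mono:
  assumes "carrot_curve c K g" "c \<le> c'"
  shows "carrot_curve c' K g"
  using assms(1) by (rule carrot_curve_le) (use assms(2) in \<open>simp add: mult_right_mono infdist_nonneg\<close>)

lemma carrot_curve_dist:
  assumes "carrot_curve c K g" "t \<in> {0..1}"
  shows "dist (pathstart g) (g t) \<le> c * infdist (g t) K"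
proof -
  have "variation_le g 0 t (c * infdist (g t) K)"
    using assms unfolding carrot_curve_def by blast
  then show ?thesis using variation_le_dist[of g 0 t] assms(2) by (simp add: pathstart_def)
qed

lemma carrot_curve_total:
  assumes "carrot_curve c K g"
  shows "variation_le g 0 1 (c * infdist (pathfinish g) K)"
proof -
  have "(1::real) \<in> {0..1}" by simp
  then show ?thesis using assms unfolding carrot_curve_def pathfinish_def by blast
qed

lemma carrot_curve_subpath:
  assumes "carrot_curve c K g" "u \<in> {0..1}" "v \<in> {0..1}" "u \<le> v"
  shows "carrot_curve c K (subpath u v g)"
  unfolding carrot_curve_def
proof
  fix s :: real assume s: "s \<in> {0..1}"
  define t where "t = (v - u) * s + u"
  have "(v - u) * s \<le> v - u" using s assms(4) by (simp add: mult_left_le)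
  then have t: "u \<le> t" "t \<in> {0..1}" using s assms(2-4) by (auto simp: t_def)
  have "variation_le g 0 t (c * infdist (g t) K)"
    using assms(1) t(2) unfolding carrot_curve_def by blast
  then have "variation_le g u t (c * infdist (g t) K)"
    using assms(2) by (intro variation_le_shrink_left[of 0 u]) simp_all
  then show "variation_le (subpath u v g) 0 s (c * infdist (subpath u v g s) K)"
    using assms(4) by (intro variation_le_subpath) (simp_all add: t_def subpath_def)
qed

lemma carrot_curve_linepath:
  fixes p q :: "'a::real_normed_vector"
  assumes "\<And>m. m \<in> closed_segment p q \<Longrightarrow> dist p m \<le> c * infdist m K"
  shows "carrot_curve c K (linepath p q)"
  unfolding carrot_curve_def
proof
  fix s :: real assume s: "s \<in> {0..1}"
  have "variation_le (linepath p q) 0 s (s * dist p q)"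
    using variation_le_linepath[of 0 s p q] s by simp
  moreover have "s * dist p q = dist p (linepath p q s)"
    using dist_linepath[of p q 0 s] s by (simp add: linepath_def)
  ultimately show "variation_le (linepath p q) 0 s (c * infdist (linepath p q s) K)"
    using assms[OF linepath_in_path[OF s]] variation_le_mono by metis
qed

lemma carrot_curve_joinpaths:
  assumes "pathfinish g = pathstart h" "carrot_curve c K g" "variation_le g 0 1 L"
    and "carrot_curve c' K' h"
    and "\<And>s. s \<in> {0..1} \<Longrightarrow> L + c' * infdist (h s) K' \<le> c * infdist (h s) K"
  shows "carrot_curve c K (g +++ h)"
  unfolding carrot_curve_def
proof
  fix t :: real assume t: "t \<in> {0..1}"
  show "variation_le (g +++ h) 0 t (c * infdist ((g +++ h) t) K)"
  proof (cases "t \<le> 1/2")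
    case True
    then have "variation_le g 0 (2 * t) (c * infdist ((g +++ h) t) K)"
      using assms(2) t unfolding carrot_curve_def joinpaths_def by simp
    then show ?thesis using variation_le_joinpaths_left True t by simp
  next
    case False
    then have t': "2 * t - 1 \<in> {0..1}" and ht: "(g +++ h) t = h (2 * t - 1)"
      using t by (auto simp: joinpaths_def)
    have "variation_le h 0 (2 * t - 1) (c' * infdist (h (2 * t - 1)) K')"
      using assms(4) t' unfolding carrot_curve_def by simp
    then have "variation_le (g +++ h) 0 t (L + c' * infdist (h (2 * t - 1)) K')"
      using False by (intro variation_le_joinpaths_right[OF _ assms(1,3)]) simp_all
    then show ?thesis using assms(5)[OF t'] ht variation_le_mono by metis
  qed
qed

section \<open>Joining arcs at first hitting times\<close>

text \<open>John domains ask for arcs, but the centre can only be joined to itself by a constant path.\<close>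
definition arc_or_const :: "(real \<Rightarrow> 'a::topological_space) \<Rightarrow> 'a \<Rightarrow> 'a \<Rightarrow> bool" where
  "arc_or_const g a b \<longleftrightarrow> path g \<and> pathstart g = a \<and> pathfinish g = b \<and> (arc g \<or> path_image g = {a})"

lemma arc_or_const_linepath: "arc_or_const (linepath a b) a b"
  unfolding arc_or_const_def by (cases "a = b") auto

lemma arc_or_const_subpath:
  fixes g :: "real \<Rightarrow> 'a::real_normed_vector"
  assumes "arc_or_const g a b" "u \<in> {0..1}" "v \<in> {0..1}"
  shows "arc_or_const (subpath u v g) (g u) (g v)"
proof -
  have "arc (subpath u v g) \<or> path_image (subpath u v g) = {g u}"
  proof (cases "u = v")
    case True
    then show ?thesis by (simp add: subpath_refl)
  next
    case False
    consider "arc g" | "path_image g = {a}" using assms(1) unfolding arc_or_const_def by blast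
    then show ?thesis
    proof cases
      case 1
      then show ?thesis using arc_subpath_arc assms(2,3) False by blast
    next
      case 2
      then have "path_image (subpath u v g) \<subseteq> {a}"
        using path_image_subpath_subset[OF assms(2,3), of g] by simp
      moreover have "g u = a" using 2 assms(2) by (auto simp: path_image_def)
      ultimately show ?thesis using path_image_nonempty[of "subpath u v g"] by blast
    qed
  qed
  then show ?thesis using assms unfolding arc_or_const_def by simp
qed

lemma first_hitting_time:
  fixes g :: "real \<Rightarrow> 'a::topological_space"
  assumes "path g" "closed T" "pathfinish g \<in> T"
  obtains u where "u \<in> {0..1}" "g u \<in> T" "\<And>x. 0 \<le> x \<Longrightarrow> x < u \<Longrightarrow> g x \<notin> T"
proof -
  define Z where "Z = {0..1} \<inter> g -` T"
  have "closed Z"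
    using assms(1,2) unfolding Z_def path_def by (intro continuous_closed_preimage) auto
  moreover have "1 \<in> Z" using assms(3) by (simp add: Z_def pathfinish_def)
  moreover have Z_bdd: "bdd_below Z" unfolding Z_def by (rule bdd_belowI[of _ 0]) auto
  ultimately have "Inf Z \<in> Z" using closed_contains_Inf by blast
  show ?thesis
  proof (rule that[of "Inf Z"])
    show "Inf Z \<in> {0..1}" "g (Inf Z) \<in> T" using \<open>Inf Z \<in> Z\<close> by (auto simp: Z_def)
    show "g x \<notin> T" if "0 \<le> x" "x < Inf Z" for x
      using cInf_lower[OF _ Z_bdd, of x] that \<open>Inf Z \<in> Z\<close> by (auto simp: Z_def)
  qed
qed

lemma arc_or_const_shortcut:
  fixes g h :: "real \<Rightarrow> 'a::real_normed_vector"
  assumes g: "arc_or_const g a b" and h: "arc_or_const h b' c" and b: "b \<in> path_image h"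
  obtains u v where "u \<in> {0..1}" "v \<in> {0..1}" "g u = h v"
    "arc_or_const (subpath 0 u g) a (g u)" "arc_or_const (subpath v 1 h) (g u) c"
    "path_image (subpath 0 u g) \<inter> path_image (subpath v 1 h) \<subseteq> {g u}"
proof -
  have paths: "path g" "path h" using g h unfolding arc_or_const_def by auto
  have "pathfinish g \<in> path_image h" using g b unfolding arc_or_const_def by simp
  then obtain u where u: "u \<in> {0..1}" "g u \<in> path_image h"
    and before: "\<And>x. 0 \<le> x \<Longrightarrow> x < u \<Longrightarrow> g x \<notin> path_image h"
    using first_hitting_time[OF paths(1) closed_path_image[OF paths(2)]] by blast
  then obtain v where v: "v \<in> {0..1}" "g u = h v" unfolding path_image_def by auto
  have "g 0 = a" "h 1 = c" using g h unfolding arc_or_const_def pathstart_def pathfinish_def by auto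
  then have arcs: "arc_or_const (subpath 0 u g) a (g u)" "arc_or_const (subpath v 1 h) (g u) c"
    using arc_or_const_subpath[OF g, of 0 u] arc_or_const_subpath[OF h, of v 1] u v by auto
  have "path_image (subpath 0 u g) \<inter> path_image (subpath v 1 h) \<subseteq> {g u}"
  proof
    fix z assume z: "z \<in> path_image (subpath 0 u g) \<inter> path_image (subpath v 1 h)"
    then obtain x where x: "x \<in> {0..u}" "z = g x" using u by (auto simp: path_image_subpath)
    have "z \<in> path_image h" using z path_image_subpath_subset[of v 1 h] v by auto
    then have "x = u" using before x by fastforce
    then show "z \<in> {g u}" using x by simp
  qed
  then show ?thesis using that u v arcs by blast
qed

lemma arc_or_const_join_carrot:
  fixes g h :: "real \<Rightarrow> 'a::real_normed_vector"
  assumes g: "arc_or_const g a b" "carrot_curve C K g" "variation_le g 0 1 L"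
    and h: "arc_or_const h b c" "carrot_curve C' K' h" "0 \<le> C'"
    and meet: "path_image g \<inter> path_image h \<subseteq> {b}"
    and le: "\<And>s. s \<in> {0..1} \<Longrightarrow> L + C' * infdist (h s) K' \<le> C * infdist (h s) K"
  obtains k where "arc_or_const k a c" "path_image k \<subseteq> path_image g \<union> path_image h"
    "carrot_curve C K k" "variation_le k 0 1 (L + C' * infdist c K')"
proof -
  have L: "0 \<le> L" using variation_le_nonneg[OF g(3)] by simp
  have h_total: "variation_le h 0 1 (C' * infdist c K')"
    using carrot_curve_total[OF h(2)] h(1) unfolding arc_or_const_def by simp
  consider "path_image h = {b}" | "path_image g = {a}" "arc h" | "arc g" "arc h"
    using g(1) h(1) unfolding arc_or_const_def by blast
  then show ?thesis
  proof cases
    case 1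
    then have "c = b" using h(1) pathfinish_in_path_image[of h] unfolding arc_or_const_def by auto
    moreover have "variation_le g 0 1 (L + C' * infdist c K')"
      using g(3) by (rule variation_le_mono) (use h(3) in \<open>simp add: infdist_nonneg\<close>)
    ultimately show ?thesis using that[of g] g by blast
  next
    case 2
    then have "a = b" using g(1) pathfinish_in_path_image[of g] unfolding arc_or_const_def by auto
    have "C' * infdist (h s) K' \<le> C * infdist (h s) K" if "s \<in> {0..1}" for s
      using le[OF that] L by linarith
    then have "carrot_curve C K h" using carrot_curve_le[OF h(2)] by blast
    moreover have "variation_le h 0 1 (L + C' * infdist c K')"
      using h_total by (rule variation_le_mono) (use L in simp)
    ultimately show ?thesis using that[of h] h(1) \<open>a = b\<close> by blast
  next
    case 3
    have ends: "pathfinish g = pathstart h" "pathstart g = a" "pathfinish h = c" "pathstart h = b"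
      using g(1) h(1) unfolding arc_or_const_def by auto
    have "arc (g +++ h)" using 3 ends meet by (intro arc_join) auto
    then have "arc_or_const (g +++ h) a c"
      using ends unfolding arc_or_const_def by (simp add: arc_imp_path)
    moreover have "carrot_curve C K (g +++ h)"
      using carrot_curve_joinpaths[OF ends(1) g(2,3) h(2) le] .
    moreover have "variation_le (g +++ h) 0 1 (L + C' * infdist c K')"
      using variation_le_joinpaths_right[OF _ ends(1) g(3)] h_total by simp
    ultimately show ?thesis using that path_image_join_subset by blast
  qed
qed

section \<open>Whitney neighbourhoods of spines are John domains\<close>

lemma ball_infdist_frontier_subset:
  fixes W :: "'a::real_normed_vector set"
  assumes "p \<in> W"
  shows "ball p (infdist p (frontier W)) \<subseteq> W"
proof
  fix y assume y: "y \<in> ball p (infdist p (frontier W))"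
  show "y \<in> W"
  proof (rule ccontr)
    assume "y \<notin> W"
    have "dist p y < infdist p (frontier W)" using y by simp
    then have "0 < infdist p (frontier W)" using zero_le_dist[of p y] by linarith
    then have "p \<in> ball p (infdist p (frontier W))" by simp
    then have "ball p (infdist p (frontier W)) \<inter> frontier W \<noteq> {}"
      using connected_Int_frontier[of "ball p (infdist p (frontier W))" W] y assms \<open>y \<notin> W\<close>
      by blast
    then obtain a where "a \<in> frontier W" "dist p a < infdist p (frontier W)" by auto
    then show False using infdist_le[of a "frontier W" p] by linarith
  qed
qed

lemma infdist_frontier_ge:
  fixes W :: "'a::euclidean_space set"
  assumes "open W" "bounded W" "ball p \<rho> \<subseteq> W" "p \<in> W"
  shows "\<rho> \<le> infdist p (frontier W)"
proof -
  have "frontier W \<noteq> {}" using assms(2,4) frontier_not_empty not_bounded_UNIV by blast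
  moreover have "\<rho> \<le> dist p a" if "a \<in> frontier W" for a
  proof -
    have "a \<notin> W" using that assms(1) by (simp add: frontier_def interior_open)
    then show ?thesis using assms(3) by (meson mem_ball not_le subsetD)
  qed
  ultimately show ?thesis by (simp add: infdist_def cINF_greatest)
qed

lemma infdist_closed_segment_ge:
  fixes y y' :: "'a::euclidean_space"
  assumes "2 * e \<le> infdist y K" "2 * e \<le> infdist y' K" "dist y y' < 2 * e"
    and "m \<in> closed_segment y y'"
  shows "e \<le> infdist m K"
proof -
  have "dist y m + dist m y' = dist y y'"
    using between[of y y' m] between_mem_segment[of y y' m] assms(4) by simp
  moreover have "infdist y K \<le> infdist m K + dist y m" "infdist y' K \<le> infdist m K + dist m y'"
    using infdist_triangle[of y K m] infdist_triangle[of y' K m] by (simp_all add: dist_commute)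
  ultimately show ?thesis using assms(1-3) by linarith
qed

lemma carrot_curve_infdist_start:
  assumes "carrot_curve c K g" "z \<in> path_image g"
  shows "infdist (pathstart g) K \<le> (1 + c) * infdist z K"
proof -
  obtain t where "t \<in> {0..1}" "z = g t" using assms(2) unfolding path_image_def by auto
  then have "dist (pathstart g) z \<le> c * infdist z K" using carrot_curve_dist[OF assms(1)] by simp
  then show ?thesis using infdist_triangle[of "pathstart g" K z] by (simp add: algebra_simps)
qed

definition whitney_nbhd :: "'a::metric_space set \<Rightarrow> 'a set \<Rightarrow> 'a set" where
  "whitney_nbhd K \<Lambda> = (\<Union>p\<in>\<Lambda>. ball p (infdist p K / 2))"

lemma open_whitney_nbhd: "open (whitney_nbhd K \<Lambda>)"
  unfolding whitney_nbhd_def by auto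

lemma subset_whitney_nbhd:
  assumes "\<And>p. p \<in> \<Lambda> \<Longrightarrow> 0 < infdist p K"
  shows "\<Lambda> \<subseteq> whitney_nbhd K \<Lambda>"
  using assms unfolding whitney_nbhd_def by force

lemma whitney_nbhd_disjoint: "whitney_nbhd K \<Lambda> \<inter> K = {}"
proof -
  have "0 < infdist z K" if "p \<in> \<Lambda>" "dist p z < infdist p K / 2" for p z
    using that infdist_triangle[of p K z] zero_le_dist[of p z] by linarith
  then show ?thesis unfolding whitney_nbhd_def by fastforce
qed

lemma whitney_nbhd_subset_ball:
  fixes K \<Lambda> :: "'a::real_normed_vector set"
  assumes "\<And>p. p \<in> \<Lambda> \<Longrightarrow> norm p + infdist p K / 2 \<le> R"
  shows "whitney_nbhd K \<Lambda> \<subseteq> ball 0 R"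
proof
  fix z assume "z \<in> whitney_nbhd K \<Lambda>"
  then obtain p where "p \<in> \<Lambda>" "dist p z < infdist p K / 2" unfolding whitney_nbhd_def by auto
  moreover have "norm z \<le> norm p + dist p z"
    using norm_triangle_sub[of z p] by (simp add: dist_norm norm_minus_commute)
  ultimately show "z \<in> ball 0 R" using assms by fastforce
qed

lemma whitney_nbhd_infdist_frontier:
  fixes K \<Lambda> :: "'a::euclidean_space set"
  assumes "bounded (whitney_nbhd K \<Lambda>)" "p \<in> \<Lambda>" "0 < infdist p K"
  shows "infdist p K \<le> 2 * infdist p (frontier (whitney_nbhd K \<Lambda>))"
proof -
  have "ball p (infdist p K / 2) \<subseteq> whitney_nbhd K \<Lambda>"
    using assms(2) unfolding whitney_nbhd_def by blast
  moreover have "p \<in> whitney_nbhd K \<Lambda>"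
    using assms(2,3) unfolding whitney_nbhd_def by force
  ultimately show ?thesis
    using infdist_frontier_ge[OF open_whitney_nbhd assms(1)] by fastforce
qed

lemma whitney_nbhd_segment:
  fixes K \<Lambda> :: "'a::euclidean_space set"
  assumes "bounded (whitney_nbhd K \<Lambda>)" "p \<in> \<Lambda>" "dist p w < infdist p K / 2"
    and "m \<in> closed_segment w p"
  shows "m \<in> whitney_nbhd K \<Lambda>" "dist w m \<le> infdist m (frontier (whitney_nbhd K \<Lambda>))"
proof -
  have sum: "dist w m + dist m p = dist w p"
    using between[of w p m] between_mem_segment[of w p m] assms(4) by simp
  have "ball m (infdist p K / 2 - dist m p) \<subseteq> ball p (infdist p K / 2)"
  proof
    fix x assume "x \<in> ball m (infdist p K / 2 - dist m p)"
    then show "x \<in> ball p (infdist p K / 2)"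
      using dist_triangle[of p x m] by (simp add: dist_commute)
  qed
  also have "\<dots> \<subseteq> whitney_nbhd K \<Lambda>" using assms(2) unfolding whitney_nbhd_def by blast
  finally have sub: "ball m (infdist p K / 2 - dist m p) \<subseteq> whitney_nbhd K \<Lambda>" .
  have "dist m p \<le> dist p w" using sum zero_le_dist[of w m] dist_commute[of w p] by linarith
  then have "dist m p < infdist p K / 2" using assms(3) by linarith
  then show m: "m \<in> whitney_nbhd K \<Lambda>" using sub by auto
  have "infdist p K / 2 - dist m p \<le> infdist m (frontier (whitney_nbhd K \<Lambda>))"
    using infdist_frontier_ge[OF open_whitney_nbhd assms(1) sub m] .
  then show "dist w m \<le> infdist m (frontier (whitney_nbhd K \<Lambda>))"
    using sum assms(3) by (simp add: dist_commute)
qed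

lemma subpath_0_linepath: "subpath 0 u (linepath a b) = linepath a (linepath a b u)"
  by (simp add: subpath_def linepath_def fun_eq_iff algebra_simps)

lemma whitney_nbhd_spine_bound:
  fixes K \<Lambda> :: "'a::euclidean_space set"
  assumes bounded: "bounded (whitney_nbhd K \<Lambda>)" and c: "1 \<le> c"
    and D: "\<And>p. p \<in> \<Lambda> \<Longrightarrow> 0 < infdist p K"
    and \<pi>: "path_image \<pi> \<subseteq> \<Lambda>" "carrot_curve c K \<pi>"
    and L: "L < infdist (pathstart \<pi>) K / 2" and z: "z \<in> path_image \<pi>"
  shows "L + c * infdist z K \<le> (3 * c + 3) * infdist z (frontier (whitney_nbhd K \<Lambda>))"
proof -
  define F where "F = frontier (whitney_nbhd K \<Lambda>)"
  have "z \<in> \<Lambda>" using z \<pi>(1) by blast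
  then have zF: "infdist z K \<le> 2 * infdist z F"
    using whitney_nbhd_infdist_frontier[OF bounded] D unfolding F_def by blast
  then have "c * infdist z K \<le> 2 * (c * infdist z F)"
    using c mult_left_mono[OF zF, of c] by simp
  moreover have "infdist (pathstart \<pi>) K \<le> infdist z K + c * infdist z K"
    using carrot_curve_infdist_start[OF \<pi>(2) z] by (simp add: distrib_right)
  ultimately have "L + c * infdist z K \<le> 3 * (c * infdist z F) + 3 * infdist z F"
    using L zF infdist_nonneg[of z F] by linarith
  also have "\<dots> = (3 * c + 3) * infdist z F" by (simp add: algebra_simps)
  finally show ?thesis unfolding F_def .
qed

lemma whitney_nbhd_segment_carrot:
  fixes K \<Lambda> :: "'a::euclidean_space set"
  assumes "bounded (whitney_nbhd K \<Lambda>)" "p \<in> \<Lambda>" "dist p w < infdist p K / 2"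
    and "q \<in> closed_segment w p"
  shows "closed_segment w q \<subseteq> whitney_nbhd K \<Lambda>"
    "carrot_curve 1 (frontier (whitney_nbhd K \<Lambda>)) (linepath w q)"
proof -
  have seg: "closed_segment w q \<subseteq> closed_segment w p" using assms(4) by (simp add: subset_closed_segment)
  then show "closed_segment w q \<subseteq> whitney_nbhd K \<Lambda>" using whitney_nbhd_segment(1)[OF assms(1-3)] by blast
  show "carrot_curve 1 (frontier (whitney_nbhd K \<Lambda>)) (linepath w q)"
    using whitney_nbhd_segment(2)[OF assms(1-3)] seg by (intro carrot_curve_linepath) auto
qed

lemma whitney_nbhd_carrot_path:
  fixes K \<Lambda> :: "'a::euclidean_space set"
  assumes bounded: "bounded (whitney_nbhd K \<Lambda>)" and c: "1 \<le> c"
    and D: "\<And>p. p \<in> \<Lambda> \<Longrightarrow> 0 < infdist p K \<and> infdist p K \<le> D"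
    and spine: "\<And>p. p \<in> \<Lambda> \<Longrightarrow> \<exists>\<pi>. arc_or_const \<pi> p y0 \<and> path_image \<pi> \<subseteq> \<Lambda> \<and> carrot_curve c K \<pi>"
    and w: "w \<in> whitney_nbhd K \<Lambda>"
  obtains \<beta> where "arc_or_const \<beta> w y0" "path_image \<beta> \<subseteq> whitney_nbhd K \<Lambda>"
    "carrot_curve (3 * c + 3) (frontier (whitney_nbhd K \<Lambda>)) \<beta>" "variation_le \<beta> 0 1 ((c + 1) * D)"
proof -
  define F where "F = frontier (whitney_nbhd K \<Lambda>)"
  obtain p where p: "p \<in> \<Lambda>" "dist p w < infdist p K / 2"
    using w unfolding whitney_nbhd_def by auto
  obtain \<pi> where \<pi>: "arc_or_const \<pi> p y0" "path_image \<pi> \<subseteq> \<Lambda>" "carrot_curve c K \<pi>"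
    using spine[OF p(1)] by blast
  have "p \<in> path_image \<pi>" "y0 \<in> \<Lambda>"
    using \<pi>(1,2) pathstart_in_path_image[of \<pi>] pathfinish_in_path_image[of \<pi>]
    unfolding arc_or_const_def by auto
  then obtain u v where uv: "u \<in> {0..1}" "v \<in> {0..1}"
    and g: "arc_or_const (linepath w (linepath w p u)) w (linepath w p u)"
    and h: "arc_or_const (subpath v 1 \<pi>) (linepath w p u) y0"
    and meet: "closed_segment w (linepath w p u) \<inter> path_image (subpath v 1 \<pi>) \<subseteq> {linepath w p u}"
    using arc_or_const_shortcut[OF arc_or_const_linepath \<pi>(1)] unfolding subpath_0_linepath
    by (metis path_image_linepath)
  define q where "q = linepath w p u"
  have q: "q \<in> closed_segment w p" using linepath_in_path[OF uv(1)] by (simp add: q_def)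
  have "dist w q < infdist p K / 2" using dist_in_closed_segment[OF q] p(2) by (simp add: dist_commute)
  have g_carrot: "carrot_curve (3 * c + 3) F (linepath w q)"
    using carrot_curve_mono[OF whitney_nbhd_segment_carrot(2)[OF bounded p q]] c unfolding F_def by simp
  have g_var: "variation_le (linepath w q) 0 1 (dist w q)" using variation_le_linepath[of 0 1 w q] by simp
  have h_carrot: "carrot_curve c K (subpath v 1 \<pi>)"
    using carrot_curve_subpath[OF \<pi>(3) uv(2)] uv(2) by simp
  have h_img: "path_image (subpath v 1 \<pi>) \<subseteq> path_image \<pi>"
    using path_image_subpath_subset[of v 1 \<pi>] uv(2) by simp
  have le: "dist w q + c * infdist (subpath v 1 \<pi> s) K \<le> (3 * c + 3) * infdist (subpath v 1 \<pi> s) F"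
    if "s \<in> {0..1}" for s
    using whitney_nbhd_spine_bound[OF bounded c _ \<pi>(2,3)] D h_img that \<pi>(1) \<open>dist w q < _\<close>
    unfolding F_def arc_or_const_def path_image_def by blast
  have meet': "path_image (linepath w q) \<inter> path_image (subpath v 1 \<pi>) \<subseteq> {q}"
    using meet by (simp add: q_def)
  have "0 \<le> c" using c by simp
  obtain \<beta> where \<beta>: "arc_or_const \<beta> w y0"
    "path_image \<beta> \<subseteq> closed_segment w q \<union> path_image (subpath v 1 \<pi>)"
    "carrot_curve (3 * c + 3) F \<beta>" "variation_le \<beta> 0 1 (dist w q + c * infdist y0 K)"
    using arc_or_const_join_carrot[OF g[folded q_def] g_carrot g_var h[folded q_def] h_carrot
        \<open>0 \<le> c\<close> meet' le] by auto
  have "path_image \<beta> \<subseteq> whitney_nbhd K \<Lambda>"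
    using \<beta>(2) h_img \<pi>(2) whitney_nbhd_segment_carrot(1)[OF bounded p q] subset_whitney_nbhd[of \<Lambda> K] D
    by blast
  moreover have "c * infdist y0 K \<le> c * D" using D[OF \<open>y0 \<in> \<Lambda>\<close>] c by (intro mult_left_mono) auto
  then have "dist w q + c * infdist y0 K \<le> (c + 1) * D"
    using \<open>dist w q < _\<close> D[OF p(1)] by (simp add: algebra_simps)
  ultimately show ?thesis
    using that \<beta>(1,3) variation_le_mono[OF \<beta>(4)] unfolding F_def by blast
qed

lemma carrot_subset:
  fixes \<beta> :: "real \<Rightarrow> pt"
  assumes "0 < c" "carrot_curve c (frontier W) \<beta>" "path_image \<beta> \<subseteq> W"
  shows "carrot \<beta> c \<subseteq> W"
proof -
  have balls: "ball (\<beta> t) (enn2real (path_length (subpath 0 t \<beta>)) / c) \<subseteq> W"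
    if t: "t \<in> {0..1}" for t
  proof -
    have "path_length (subpath 0 t \<beta>) \<le> ennreal (c * infdist (\<beta> t) (frontier W))"
      using assms(1,2) t carrot_curve_iff_path_length[of c] by simp
    then have "enn2real (path_length (subpath 0 t \<beta>)) \<le> c * infdist (\<beta> t) (frontier W)"
      using assms(1) by (intro enn2real_leI) (simp_all add: infdist_nonneg)
    then have "enn2real (path_length (subpath 0 t \<beta>)) / c \<le> infdist (\<beta> t) (frontier W)"
      using assms(1) by (simp add: divide_le_eq mult.commute)
    moreover have "\<beta> t \<in> W" using assms(3) t unfolding path_image_def by auto
    ultimately show ?thesis using ball_infdist_frontier_subset subset_ball by blast
  qed
  show ?thesis
    unfolding carrot_def
  proof (rule Union_least)
    fix B assume "B \<in> {ball (\<beta> t) (enn2real (path_length (subpath 0 t \<beta>)) / c) | t.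
      t \<in> {0<..1} \<and> \<beta> t \<noteq> pathstart \<beta>}"
    then obtain t where "t \<in> {0<..1}" "B = ball (\<beta> t) (enn2real (path_length (subpath 0 t \<beta>)) / c)"
      by blast
    then show "B \<subseteq> W" using balls[of t] by simp
  qed
qed

lemma john_domainI:
  fixes W :: "pt set"
  assumes "open W" "bounded W" "y0 \<in> W" "0 \<le> c"
    and paths: "\<And>x. x \<in> W \<Longrightarrow>
      \<exists>\<beta>. arc_or_const \<beta> x y0 \<and> path_image \<beta> \<subseteq> W \<and> carrot_curve c (frontier W) \<beta>"
  shows "john_domain W c y0"
proof -
  have "path_component W x y0" if "x \<in> W" for x
    using paths[OF that] unfolding path_component_def arc_or_const_def by blast
  then have "path_connected W"
    unfolding path_connected_component by (metis path_component_sym path_component_trans)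
  moreover have "x = y0 \<or> (\<exists>\<gamma>. arc \<gamma> \<and> pathstart \<gamma> = x \<and> pathfinish \<gamma> = y0 \<and> path_image \<gamma> \<subseteq> W \<and>
      (\<forall>t\<in>{0..1}. path_length (subpath 0 t \<gamma>) \<le> ennreal (c * infdist (\<gamma> t) (frontier W))))"
    if "x \<in> W" for x
  proof (cases "x = y0")
    case False
    obtain \<beta> where \<beta>: "arc_or_const \<beta> x y0" "path_image \<beta> \<subseteq> W" "carrot_curve c (frontier W) \<beta>"
      using paths[OF \<open>x \<in> W\<close>] by blast
    have "arc \<beta>"
      using \<beta>(1) False pathfinish_in_path_image[of \<beta>] unfolding arc_or_const_def by auto
    then show ?thesis using \<beta> carrot_curve_iff_path_length[OF assms(4)]
      unfolding arc_or_const_def by blast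
  qed simp
  ultimately show ?thesis
    using assms(1-3) path_connected_imp_connected unfolding john_domain_def by blast
qed


definition carrot_domain :: "pt set \<Rightarrow> real \<Rightarrow> real \<Rightarrow> pt \<Rightarrow> bool" where
  "carrot_domain W c L y0 \<longleftrightarrow> john_domain W c y0 \<and>
     (\<forall>x\<in>W. \<exists>\<beta>. path \<beta> \<and> pathstart \<beta> = x \<and> pathfinish \<beta> = y0 \<and> path_image \<beta> \<subseteq> W \<and>
        path_length \<beta> \<le> ennreal L \<and> carrot \<beta> c \<subseteq> W)"

lemma whitney_nbhd_carrot_domain:
  fixes K \<Lambda> :: "pt set"
  assumes bounded: "bounded (whitney_nbhd K \<Lambda>)" and c: "1 \<le> c" and y0: "y0 \<in> \<Lambda>"
    and D: "\<And>p. p \<in> \<Lambda> \<Longrightarrow> 0 < infdist p K \<and> infdist p K \<le> D"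
    and spine: "\<And>p. p \<in> \<Lambda> \<Longrightarrow> \<exists>\<pi>. arc_or_const \<pi> p y0 \<and> path_image \<pi> \<subseteq> \<Lambda> \<and> carrot_curve c K \<pi>"
  shows "carrot_domain (whitney_nbhd K \<Lambda>) (3 * c + 3) ((c + 1) * D) y0"
proof -
  define W where "W = whitney_nbhd K \<Lambda>"
  have paths: "\<exists>\<beta>. arc_or_const \<beta> x y0 \<and> path_image \<beta> \<subseteq> W \<and>
      carrot_curve (3 * c + 3) (frontier W) \<beta> \<and> variation_le \<beta> 0 1 ((c + 1) * D)"
    if x: "x \<in> W" for x
  proof -
    obtain \<beta> where "arc_or_const \<beta> x y0" "path_image \<beta> \<subseteq> W"
      "carrot_curve (3 * c + 3) (frontier W) \<beta>" "variation_le \<beta> 0 1 ((c + 1) * D)"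
      unfolding W_def by (rule whitney_nbhd_carrot_path[OF bounded c D spine x[unfolded W_def]])
    then show ?thesis by blast
  qed
  have "y0 \<in> W" using subset_whitney_nbhd[of \<Lambda> K] D y0 unfolding W_def by blast
  have "0 \<le> D" using D[OF y0] by linarith
  have "john_domain W (3 * c + 3) y0"
  proof (rule john_domainI)
    show "open W" unfolding W_def by (rule open_whitney_nbhd)
    show "0 \<le> 3 * c + 3" using c by simp
    show "bounded W" "y0 \<in> W" using bounded \<open>y0 \<in> W\<close> by (simp_all add: W_def)
  qed (use paths in blast)
  moreover have "\<exists>\<beta>. path \<beta> \<and> pathstart \<beta> = x \<and> pathfinish \<beta> = y0 \<and> path_image \<beta> \<subseteq> W \<and>
      path_length \<beta> \<le> ennreal ((c + 1) * D) \<and> carrot \<beta> (3 * c + 3) \<subseteq> W" if x: "x \<in> W" for x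
  proof -
    obtain \<beta> where \<beta>: "arc_or_const \<beta> x y0" "path_image \<beta> \<subseteq> W"
      "carrot_curve (3 * c + 3) (frontier W) \<beta>" "variation_le \<beta> 0 1 ((c + 1) * D)"
      using paths[OF x] by blast
    have "path_length \<beta> \<le> ennreal ((c + 1) * D)"
      using \<beta>(4) path_length_le_iff c \<open>0 \<le> D\<close> by simp
    moreover have "carrot \<beta> (3 * c + 3) \<subseteq> W" using carrot_subset[OF _ \<beta>(3,2)] c by simp
    ultimately show ?thesis using \<beta>(1,2) unfolding arc_or_const_def by blast
  qed
  ultimately show ?thesis unfolding carrot_domain_def W_def by blast
qed

section \<open>Spines\<close>

lemma carrot_curve_linepath_far:
  fixes Y y0 :: "'a::euclidean_space"
  assumes far: "\<And>m. m \<in> closed_segment Y y0 \<Longrightarrow> e \<le> infdist m K"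
    and close: "dist Y y0 < 2 * e" and q: "q \<in> closed_segment Y y0"
  shows "carrot_curve 2 K (linepath q y0)"
proof (rule carrot_curve_linepath)
  fix m assume m: "m \<in> closed_segment q y0"
  then have "m \<in> closed_segment Y y0" using q subset_closed_segment by blast
  moreover have "dist q m \<le> dist Y y0"
    using dist_in_closed_segment[OF m] dist_in_closed_segment[OF q] by (simp add: dist_commute)
  ultimately show "dist q m \<le> 2 * infdist m K" using far close by fastforce
qed

lemma arc_segment_spine:
  fixes g :: "real \<Rightarrow> 'a::euclidean_space"
  assumes g: "arc_or_const g p Y" "carrot_curve J K g" "0 \<le> J" "J \<le> c" "2 \<le> c"
    and R: "\<And>z. z \<in> path_image g \<Longrightarrow> infdist z K \<le> R"
    and seg: "carrot_curve 2 K (linepath Y y0)" "\<And>m. m \<in> closed_segment Y y0 \<Longrightarrow> e \<le> infdist m K"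
    and c: "J * R + 2 * e \<le> c * e"
  obtains \<pi> where "arc_or_const \<pi> p y0" "path_image \<pi> \<subseteq> path_image g \<union> closed_segment Y y0"
    "carrot_curve c K \<pi>"
proof -
  have "Y \<in> path_image (linepath Y y0)" by simp
  then obtain u v where uv: "u \<in> {0..1}" "v \<in> {0..1}"
    and g': "arc_or_const (subpath 0 u g) p (g u)"
    and h': "arc_or_const (subpath v 1 (linepath Y y0)) (g u) y0"
    and meet: "path_image (subpath 0 u g) \<inter> path_image (subpath v 1 (linepath Y y0)) \<subseteq> {g u}"
    using arc_or_const_shortcut[OF g(1) arc_or_const_linepath] by metis
  have g'_carrot: "carrot_curve J K (subpath 0 u g)"
    using carrot_curve_subpath[OF g(2) _ uv(1)] uv(1) by simp
  have g'_var: "variation_le (subpath 0 u g) 0 1 (J * infdist (g u) K)"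
    using carrot_curve_total[OF g'_carrot] by simp
  have g'_img: "path_image (subpath 0 u g) \<subseteq> path_image g"
    using path_image_subpath_subset[of 0 u g] uv(1) by simp
  have h'_img: "path_image (subpath v 1 (linepath Y y0)) \<subseteq> closed_segment Y y0"
    using path_image_subpath_subset[of v 1 "linepath Y y0"] uv(2) by simp
  have h'_carrot: "carrot_curve 2 K (subpath v 1 (linepath Y y0))"
    using carrot_curve_subpath[OF seg(1) uv(2)] uv(2) by simp
  have le: "J * infdist (g u) K + 2 * infdist (subpath v 1 (linepath Y y0) s) K
      \<le> c * infdist (subpath v 1 (linepath Y y0) s) K" if s: "s \<in> {0..1}" for s
  proof -
    define d where "d = infdist (subpath v 1 (linepath Y y0) s) K"
    have "e \<le> d" using seg(2) h'_img s unfolding d_def path_image_def by blast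
    then have "(c - 2) * e \<le> (c - 2) * d" using g(5) by (intro mult_left_mono) auto
    moreover have "g u \<in> path_image g" using uv(1) unfolding path_image_def by blast
    then have "J * infdist (g u) K \<le> J * R" using R g(3) by (intro mult_left_mono) auto
    ultimately show ?thesis using c unfolding d_def[symmetric] by (simp add: algebra_simps)
  qed
  have "(0::real) \<le> 2" by simp
  obtain k where "arc_or_const k p y0"
    "path_image k \<subseteq> path_image (subpath 0 u g) \<union> path_image (subpath v 1 (linepath Y y0))"
    "carrot_curve c K k"
    using arc_or_const_join_carrot[OF g' carrot_curve_mono[OF g'_carrot g(4)]
        g'_var h' h'_carrot \<open>0 \<le> 2\<close> meet le] by blast
  then show ?thesis using that g'_img h'_img by blast
qed

lemma spine_path:
  fixes \<eta> :: "real \<Rightarrow> 'a::euclidean_space"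
  assumes \<eta>: "arc_or_const \<eta> x Y" "carrot_curve J K \<eta>" "0 \<le> J" "J \<le> c"
    and R: "\<And>z. z \<in> path_image \<eta> \<Longrightarrow> infdist z K \<le> R"
    and far: "2 * e \<le> infdist Y K" "2 * e \<le> infdist y0 K" and close: "dist Y y0 < 2 * e"
    and c: "J * R + 2 * e \<le> c * e"
    and p: "p \<in> path_image \<eta> \<union> closed_segment Y y0"
  obtains \<pi> where "arc_or_const \<pi> p y0" "path_image \<pi> \<subseteq> path_image \<eta> \<union> closed_segment Y y0"
    "carrot_curve c K \<pi>"
proof -
  have seg_far: "e \<le> infdist m K" if "m \<in> closed_segment Y y0" for m
    using infdist_closed_segment_ge[OF far close that] .
  have "pathstart \<eta> \<in> path_image \<eta>" by (rule pathstart_in_path_image)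
  then have "0 \<le> R" using R infdist_nonneg order_trans by blast
  have "0 < e" using close zero_le_dist[of Y y0] by linarith
  have "2 * e \<le> c * e" using c mult_nonneg_nonneg[OF \<eta>(3) \<open>0 \<le> R\<close>] by linarith
  then have c2: "2 \<le> c" using \<open>0 < e\<close> by simp
  show ?thesis
  proof (cases "p \<in> closed_segment Y y0")
    case True
    then have "closed_segment p y0 \<subseteq> closed_segment Y y0" by (simp add: subset_closed_segment)
    moreover have "carrot_curve c K (linepath p y0)"
      using carrot_curve_linepath_far[OF seg_far close True] c2 by (rule carrot_curve_mono)
    ultimately show ?thesis using that[OF arc_or_const_linepath] by auto
  next
    case False
    then obtain t0 where t0: "t0 \<in> {0..1}" "p = \<eta> t0" using p unfolding path_image_def by auto
    have "\<eta> 1 = Y" using \<eta>(1) unfolding arc_or_const_def pathfinish_def by simp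
    then have "arc_or_const (subpath t0 1 \<eta>) p Y"
      using arc_or_const_subpath[OF \<eta>(1) t0(1), of 1] t0 by simp
    moreover have "carrot_curve J K (subpath t0 1 \<eta>)"
      using carrot_curve_subpath[OF \<eta>(2) t0(1)] t0(1) by simp
    moreover have img: "path_image (subpath t0 1 \<eta>) \<subseteq> path_image \<eta>"
      using path_image_subpath_subset[of t0 1 \<eta>] t0(1) by simp
    ultimately obtain \<pi> where "arc_or_const \<pi> p y0"
      "path_image \<pi> \<subseteq> path_image (subpath t0 1 \<eta>) \<union> closed_segment Y y0" "carrot_curve c K \<pi>"
      using arc_segment_spine[OF _ _ \<eta>(3,4) c2 _ carrot_curve_linepath_far[OF seg_far close] seg_far c]
        R img by blast
    then show ?thesis using that img by blast
  qed
qed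

lemma first_exit_time:
  fixes g :: "real \<Rightarrow> 'a::real_normed_vector"
  assumes g: "path g" and start: "norm (pathstart g) < \<rho>" and finish: "\<rho> \<le> norm (pathfinish g)"
  obtains u where "u \<in> {0..1}" "norm (g u) = \<rho>" "\<And>s. 0 \<le> s \<Longrightarrow> s < u \<Longrightarrow> norm (g s) < \<rho>"
proof -
  have "closed {y::'a. \<rho> \<le> norm y}" by (intro closed_Collect_le continuous_intros)
  then obtain u where u: "u \<in> {0..1}" "g u \<in> {y. \<rho> \<le> norm y}"
    and before: "\<And>s. 0 \<le> s \<Longrightarrow> s < u \<Longrightarrow> g s \<notin> {y. \<rho> \<le> norm y}"
    using first_hitting_time[OF g] finish by blast
  have "norm (g u) = \<rho>"
  proof (rule ccontr)
    assume "norm (g u) \<noteq> \<rho>"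
    have "continuous_on {0..u} g"
      using g unfolding path_def by (rule continuous_on_subset) (use u(1) in auto)
    then have "continuous_on {0..u} (\<lambda>s. norm (g s))" by (rule continuous_on_norm)
    then obtain s where "0 \<le> s" "s \<le> u" "norm (g s) = \<rho>"
      using IVT'[of "\<lambda>s. norm (g s)" 0 \<rho> u] start u unfolding pathstart_def by force
    then show False using before[of s] \<open>norm (g u) \<noteq> \<rho>\<close> by fastforce
  qed
  then show ?thesis using that u(1) before by force
qed

lemma first_exit_arc:
  fixes \<gamma> :: "real \<Rightarrow> 'a::real_normed_vector"
  assumes \<gamma>: "arc \<gamma>" "pathstart \<gamma> = x" "carrot_curve J K \<gamma>"
    and x: "norm x < r" and leaves: "\<not> path_image \<gamma> \<subseteq> ball x (4 * r)"
  obtains \<eta> where "arc \<eta>" "pathstart \<eta> = x" "path_image \<eta> \<subseteq> path_image \<gamma> \<inter> cball 0 (3 * r)"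
    "norm (pathfinish \<eta>) = 3 * r" "carrot_curve J K \<eta>" "2 * r \<le> J * infdist (pathfinish \<eta>) K"
proof -
  have "0 < r" using x norm_ge_zero[of x] by linarith
  obtain t1 where t1: "t1 \<in> {0..1}" "\<gamma> t1 \<notin> ball x (4 * r)"
    using leaves unfolding path_image_def by blast
  have "dist x (\<gamma> t1) \<le> norm x + norm (\<gamma> t1)" by (simp add: dist_norm norm_triangle_ineq4)
  then have far: "3 * r \<le> norm (\<gamma> t1)" using t1(2) x by simp
  have "\<gamma> 0 = x" using \<gamma>(2) by (simp add: pathstart_def)
  then have "t1 \<noteq> 0" using t1(2) \<open>0 < r\<close> by auto
  define g where "g = subpath 0 t1 \<gamma>"
  have g: "arc g" using arc_subpath_arc[OF \<gamma>(1) _ t1(1) \<open>t1 \<noteq> 0\<close>[symmetric]] by (simp add: g_def)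
  have g0: "g 0 = x" using \<open>\<gamma> 0 = x\<close> by (simp add: g_def subpath_def)
  have "norm (pathstart g) < 3 * r" using g0 x \<open>0 < r\<close> by (simp add: pathstart_def)
  moreover have "3 * r \<le> norm (pathfinish g)" using far by (simp add: g_def)
  ultimately obtain u where u: "u \<in> {0..1}" "norm (g u) = 3 * r"
    and before: "\<And>s. 0 \<le> s \<Longrightarrow> s < u \<Longrightarrow> norm (g s) < 3 * r"
    using first_exit_time[OF arc_imp_path[OF g]] by blast
  have "u \<noteq> 0" using u(2) g0 x \<open>0 < r\<close> by auto
  define \<eta> where "\<eta> = subpath 0 u g"
  have "arc \<eta>" using arc_subpath_arc[OF g _ u(1) \<open>u \<noteq> 0\<close>[symmetric]] by (simp add: \<eta>_def)
  moreover have "path_image \<eta> \<subseteq> path_image \<gamma>"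
    using path_image_subpath_subset[of 0 u g] path_image_subpath_subset[of 0 t1 \<gamma>] u(1) t1(1)
    by (simp add: \<eta>_def g_def)
  moreover have "path_image \<eta> \<subseteq> cball 0 (3 * r)"
    using before u by (auto simp: \<eta>_def path_image_subpath le_less)
  moreover have carrot: "carrot_curve J K \<eta>"
    using carrot_curve_subpath[OF carrot_curve_subpath[OF \<gamma>(3) _ t1(1)] _ u(1)] t1(1) u(1)
    by (simp add: \<eta>_def g_def)
  moreover have "dist x (pathfinish \<eta>) \<le> J * infdist (pathfinish \<eta>) K"
    using carrot_curve_dist[OF carrot, of 1] g0 by (simp add: \<eta>_def pathfinish_def)
  moreover have "norm (pathfinish \<eta>) \<le> norm x + dist x (pathfinish \<eta>)"
    using norm_triangle_sub[of "pathfinish \<eta>" x] by (simp add: dist_norm norm_minus_commute)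
  ultimately show ?thesis
    using that[of \<eta>] u(2) g0 x by (simp add: \<eta>_def)
qed

section \<open>Clustering the exit points\<close>

definition grid_cell :: "real \<Rightarrow> real^2 \<Rightarrow> int \<times> int" where
  "grid_cell h y = (\<lfloor>y $ 1 / h\<rfloor>, \<lfloor>y $ 2 / h\<rfloor>)"

lemma grid_cell_dist:
  assumes "grid_cell h y = grid_cell h y'" "0 < h"
  shows "dist y y' < 2 * h"
proof -
  have comp: "\<bar>y $ i - y' $ i\<bar> < h" if "\<lfloor>y $ i / h\<rfloor> = \<lfloor>y' $ i / h\<rfloor>" for i
  proof -
    have "\<bar>y $ i / h - y' $ i / h\<bar> < 1"
      using floor_correct[of "y $ i / h"] floor_correct[of "y' $ i / h"] that
      by (simp add: abs_less_iff) linarith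
    then show ?thesis using assms(2) by (simp add: diff_divide_distrib[symmetric] abs_divide)
  qed
  have "dist y y' \<le> (\<Sum>i\<in>UNIV. \<bar>(y - y') $ i\<bar>)" using norm_le_l1_cart[of "y - y'"] by (simp add: dist_norm)
  also have "\<dots> = \<bar>y $ 1 - y' $ 1\<bar> + \<bar>y $ 2 - y' $ 2\<bar>" by (simp add: sum_2)
  also have "\<dots> < 2 * h"
    using comp[of 1] comp[of 2] assms(1) unfolding grid_cell_def by simp
  finally show ?thesis .
qed

lemma grid_cell_bound:
  assumes "norm y \<le> R" "0 < h"
  shows "grid_cell h y \<in> {-\<lceil>R / h\<rceil>..\<lceil>R / h\<rceil>} \<times> {-\<lceil>R / h\<rceil>..\<lceil>R / h\<rceil>}"
proof -
  have "\<lfloor>y $ i / h\<rfloor> \<in> {-\<lceil>R / h\<rceil>..\<lceil>R / h\<rceil>}" for i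
  proof -
    have "\<bar>y $ i\<bar> \<le> R" using component_le_norm_cart[of y i] assms(1) by simp
    then have "- R \<le> y $ i" "y $ i \<le> R" by auto
    then have "(- R) / h \<le> y $ i / h" "y $ i / h \<le> R / h"
      using assms(2) divide_right_mono by force+
    then have "\<lfloor>- (R / h)\<rfloor> \<le> \<lfloor>y $ i / h\<rfloor>" "\<lfloor>y $ i / h\<rfloor> \<le> \<lfloor>R / h\<rfloor>"
      by (simp_all add: floor_mono)
    then show ?thesis using floor_le_ceiling[of "R / h"] by (simp add: ceiling_def)
  qed
  then show ?thesis by (simp add: grid_cell_def)
qed

lemma grid_clusters:
  fixes Y :: "'a \<Rightarrow> real^2"
  assumes h: "0 < h" and Y: "\<And>x. x \<in> B \<Longrightarrow> norm (Y x) \<le> R"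
  obtains n :: nat and A :: "nat \<Rightarrow> 'a set" and rep :: "nat \<Rightarrow> 'a" where
    "n \<le> nat (2 * \<lceil>R / h\<rceil> + 1) ^ 2" "B \<subseteq> (\<Union>j\<in>{1..n}. A j)"
    "\<And>j. j \<in> {1..n} \<Longrightarrow> A j \<subseteq> B \<and> rep j \<in> A j \<and> (\<forall>x\<in>A j. dist (Y x) (Y (rep j)) < 2 * h)"
proof -
  define M where "M = \<lceil>R / h\<rceil>"
  define cells where "cells = (\<lambda>x. grid_cell h (Y x)) ` B"
  have sub: "cells \<subseteq> {-M..M} \<times> {-M..M}"
    using grid_cell_bound[OF Y h] unfolding cells_def M_def by blast
  then have fin: "finite cells" by (rule finite_subset) simp
  have "card cells \<le> card ({-M..M} \<times> {-M..M})" using sub by (intro card_mono) auto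
  also have "\<dots> = nat (2 * M + 1) ^ 2" by (simp add: card_cartesian_product power2_eq_square)
  finally have card: "card cells \<le> nat (2 * \<lceil>R / h\<rceil> + 1) ^ 2" by (simp add: M_def)
  obtain e where e: "bij_betw e {1..card cells} cells" using ex_bij_betw_nat_finite_1[OF fin] by blast
  define A where "A j = {x \<in> B. grid_cell h (Y x) = e j}" for j
  define rep where "rep j = (SOME x. x \<in> A j)" for j
  show ?thesis
  proof (rule that[of "card cells" A rep, OF card])
    show "B \<subseteq> (\<Union>j\<in>{1..card cells}. A j)"
    proof
      fix x assume "x \<in> B"
      then have "grid_cell h (Y x) \<in> e ` {1..card cells}"
        using e unfolding bij_betw_def cells_def by blast
      then show "x \<in> (\<Union>j\<in>{1..card cells}. A j)" using \<open>x \<in> B\<close> unfolding A_def by auto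
    qed
    fix j assume "j \<in> {1..card cells}"
    then have "e j \<in> cells" using bij_betw_apply[OF e] by blast
    then obtain x0 where "x0 \<in> B" "grid_cell h (Y x0) = e j" unfolding cells_def by (metis imageE)
    then have "x0 \<in> A j" by (simp add: A_def)
    then have rep: "rep j \<in> A j" unfolding rep_def by (rule someI)
    have "A j \<subseteq> B" by (auto simp: A_def)
    moreover have "dist (Y x) (Y (rep j)) < 2 * h" if "x \<in> A j" for x
    proof -
      have "grid_cell h (Y x) = grid_cell h (Y (rep j))" using that rep by (simp add: A_def)
      then show ?thesis using grid_cell_dist h by blast
    qed
    ultimately show "A j \<subseteq> B \<and> rep j \<in> A j \<and> (\<forall>x\<in>A j. dist (Y x) (Y (rep j)) < 2 * h)"
      using rep by blast
  qed
qed

section \<open>The covering\<close>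

definition exit_arc :: "real \<Rightarrow> pt set \<Rightarrow> real \<Rightarrow> pt \<Rightarrow> (real \<Rightarrow> pt) \<Rightarrow> bool" where
  "exit_arc J K r x \<eta> \<longleftrightarrow> arc \<eta> \<and> pathstart \<eta> = x \<and> path_image \<eta> \<subseteq> cball 0 (3 * r) - K \<and>
     norm (pathfinish \<eta>) = 3 * r \<and> carrot_curve J K \<eta> \<and> 2 * r \<le> J * infdist (pathfinish \<eta>) K"

lemma divide_le_infdist:
  assumes "1 \<le> J" "2 * r \<le> J * infdist y K"
  shows "2 * (r / J) \<le> infdist y K"
  using assms by (simp add: field_simps)

lemma exit_spine_bounds:
  assumes J: "1 \<le> J" and r: "0 < r" and K: "closed K" "0 \<in> K"
    and \<eta>: "exit_arc J K r x \<eta>" "dist (pathfinish \<eta>) y0 < 2 * (r / J)"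
    and y0: "norm y0 = 3 * r" "2 * r \<le> J * infdist y0 K"
    and p: "p \<in> path_image \<eta> \<union> closed_segment (pathfinish \<eta>) y0"
  shows "norm p \<le> 3 * r \<and> 0 < infdist p K \<and> infdist p K \<le> 3 * r"
proof -
  have "closed_segment (pathfinish \<eta>) y0 \<subseteq> cball 0 (3 * r)"
    using \<eta>(1) y0(1) unfolding exit_arc_def by (intro closed_segment_subset) auto
  then have "norm p \<le> 3 * r" using p \<eta>(1) unfolding exit_arc_def by auto
  moreover have "0 < infdist p K"
  proof (cases "p \<in> path_image \<eta>")
    case True
    then show ?thesis
      using \<eta>(1) infdist_pos_not_in_closed[OF K(1)] K(2) unfolding exit_arc_def by blast
  next
    case False
    then have "r / J \<le> infdist p K"
      using infdist_closed_segment_ge[OF divide_le_infdist divide_le_infdist \<eta>(2)] J y0(2) \<eta>(1) p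
      unfolding exit_arc_def by blast
    moreover have "0 < r / J" using J r by simp
    ultimately show ?thesis by linarith
  qed
  moreover have "infdist p K \<le> norm p" using infdist_le[OF K(2), of p] by simp
  ultimately show ?thesis by linarith
qed

lemma exit_spine_path:
  assumes J: "1 \<le> J" and r: "0 < r" and K: "closed K" "0 \<in> K"
    and \<eta>: "exit_arc J K r x \<eta>" "dist (pathfinish \<eta>) y0 < 2 * (r / J)"
    and y0: "norm y0 = 3 * r" "2 * r \<le> J * infdist y0 K"
    and p: "p \<in> path_image \<eta> \<union> closed_segment (pathfinish \<eta>) y0"
  obtains \<pi> where "arc_or_const \<pi> p y0"
    "path_image \<pi> \<subseteq> path_image \<eta> \<union> closed_segment (pathfinish \<eta>) y0"
    "carrot_curve (3 * J^2 + 2) K \<pi>"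
proof (rule spine_path)
  show "arc_or_const \<eta> x (pathfinish \<eta>)" "carrot_curve J K \<eta>"
    using \<eta>(1) unfolding exit_arc_def arc_or_const_def by (auto simp: arc_imp_path)
  show "infdist z K \<le> 3 * r" if "z \<in> path_image \<eta>" for z
    using exit_spine_bounds[OF J r K \<eta> y0] that by blast
  show "2 * (r / J) \<le> infdist (pathfinish \<eta>) K" "2 * (r / J) \<le> infdist y0 K"
    using divide_le_infdist[OF J] \<eta>(1) y0(2) unfolding exit_arc_def by blast+
  have "J \<le> J * J" using J by simp
  then show "0 \<le> J" "J \<le> 3 * J^2 + 2" using J unfolding power2_eq_square by linarith+
  show "J * (3 * r) + 2 * (r / J) \<le> (3 * J^2 + 2) * (r / J)"
    using J by (simp add: field_simps power2_eq_square)
qed (use \<eta>(2) p in simp_all)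

lemma cell_carrot_domain:
  fixes \<eta> :: "pt \<Rightarrow> real \<Rightarrow> pt"
  assumes J: "1 \<le> J" and r: "0 < r" and K: "closed K" "0 \<in> K" and x1: "x1 \<in> A"
    and \<eta>: "\<And>x. x \<in> A \<Longrightarrow> exit_arc J K r x (\<eta> x) \<and> dist (pathfinish (\<eta> x)) y0 < 2 * (r / J)"
    and y0: "norm y0 = 3 * r" "2 * r \<le> J * infdist y0 K"
  obtains W where "carrot_domain W (3 * (3 * J^2 + 2) + 3) (3 * (3 * J^2 + 3) * r) y0"
    "W \<subseteq> ball 0 (5 * r) - K" "y0 \<in> W" "A \<subseteq> W"
proof -
  define \<Lambda> where "\<Lambda> = (\<Union>x\<in>A. path_image (\<eta> x) \<union> closed_segment (pathfinish (\<eta> x)) y0)"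
  define W where "W = whitney_nbhd K \<Lambda>"
  have bounds: "norm p \<le> 3 * r \<and> 0 < infdist p K \<and> infdist p K \<le> 3 * r" if "p \<in> \<Lambda>" for p
    using that exit_spine_bounds[OF J r K _ _ y0] \<eta> unfolding \<Lambda>_def by blast
  have spine: "\<exists>\<pi>. arc_or_const \<pi> p y0 \<and> path_image \<pi> \<subseteq> \<Lambda> \<and> carrot_curve (3 * J^2 + 2) K \<pi>"
    if p: "p \<in> \<Lambda>" for p
  proof -
    obtain x where x: "x \<in> A" "p \<in> path_image (\<eta> x) \<union> closed_segment (pathfinish (\<eta> x)) y0"
      using p unfolding \<Lambda>_def by blast
    obtain \<pi> where "arc_or_const \<pi> p y0" "carrot_curve (3 * J^2 + 2) K \<pi>"
      "path_image \<pi> \<subseteq> path_image (\<eta> x) \<union> closed_segment (pathfinish (\<eta> x)) y0"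
      using exit_spine_path[OF J r K _ _ y0 x(2)] \<eta>[OF x(1)] by blast
    then show ?thesis using x(1) unfolding \<Lambda>_def by blast
  qed
  have "norm p + infdist p K / 2 \<le> 5 * r" if "p \<in> \<Lambda>" for p
    using bounds[OF that] r by linarith
  then have W_ball: "W \<subseteq> ball 0 (5 * r)" unfolding W_def by (rule whitney_nbhd_subset_ball)
  have \<Lambda>_W: "\<Lambda> \<subseteq> W" unfolding W_def by (rule subset_whitney_nbhd) (use bounds in blast)
  have "y0 \<in> \<Lambda>" using x1 unfolding \<Lambda>_def by auto
  have eq: "3 * (3 * J^2 + 3) * r = (3 * J^2 + 2 + 1) * (3 * r)" by (simp add: algebra_simps)
  have "carrot_domain W (3 * (3 * J^2 + 2) + 3) (3 * (3 * J^2 + 3) * r) y0"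
    unfolding W_def eq
  proof (rule whitney_nbhd_carrot_domain[OF _ _ \<open>y0 \<in> \<Lambda>\<close> _ spine])
    show "bounded (whitney_nbhd K \<Lambda>)" using W_ball bounded_subset bounded_ball unfolding W_def by blast
  qed (use bounds in auto)
  moreover have "A \<subseteq> \<Lambda>"
    using \<eta> pathstart_in_path_image unfolding \<Lambda>_def exit_arc_def by fastforce
  ultimately show ?thesis
  proof (intro that)
    show "W \<subseteq> ball 0 (5 * r) - K" using W_ball whitney_nbhd_disjoint[of K \<Lambda>] unfolding W_def by blast
  qed (use \<Lambda>_W \<open>y0 \<in> \<Lambda>\<close> in auto)
qed

lemma david_exit_arc:
  fixes \<Omega> K :: "pt set" and J r :: real
  assumes J: "1 \<le> J" and david: "david_property \<Omega> K J" and "0 \<in> \<Omega>"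
    and r: "0 < r" "18 * r < infdist 0 (frontier \<Omega>)" and x: "x \<in> ball 0 r - K"
  shows "\<exists>\<eta>. exit_arc J K r x \<eta>"
proof -
  have "norm x < r" "x \<notin> K" using x by auto
  have "infdist 0 (frontier \<Omega>) \<le> infdist x (frontier \<Omega>) + norm x"
    using infdist_triangle[of 0 "frontier \<Omega>" x] by simp
  then have \<rho>: "0 < 4 * r \<and> 4 * r \<le> infdist x (frontier \<Omega>) / 2"
    using r \<open>norm x < r\<close> by linarith
  have "x \<in> ball 0 (infdist 0 (frontier \<Omega>))" using \<open>norm x < r\<close> r by simp
  then have "x \<in> \<Omega> - K" using ball_infdist_frontier_subset[OF \<open>0 \<in> \<Omega>\<close>] \<open>x \<notin> K\<close> by blast
  then obtain \<gamma> where \<gamma>: "arc \<gamma>" "pathstart \<gamma> = x" "path_image \<gamma> \<subseteq> \<Omega> - K"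
      "\<not> path_image \<gamma> \<subseteq> ball x (4 * r)"
      "\<forall>t\<in>{0..1}. path_length (subpath 0 t \<gamma>) \<le> ennreal (J * infdist (\<gamma> t) K)"
    using david[unfolded david_property_def, rule_format, OF \<open>x \<in> \<Omega> - K\<close> \<rho>] by blast
  have "carrot_curve J K \<gamma>" using \<gamma>(5) carrot_curve_iff_path_length J by simp
  then obtain \<eta> where \<eta>: "arc \<eta>" "pathstart \<eta> = x" "path_image \<eta> \<subseteq> path_image \<gamma> \<inter> cball 0 (3 * r)"
    "norm (pathfinish \<eta>) = 3 * r" "carrot_curve J K \<eta>" "2 * r \<le> J * infdist (pathfinish \<eta>) K"
    by (rule first_exit_arc[OF \<gamma>(1,2) _ \<open>norm x < r\<close> \<gamma>(4)])
  then have "exit_arc J K r x \<eta>" using \<gamma>(3) unfolding exit_arc_def by blast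
  then show ?thesis by blast
qed

lemma mem_open_of_closure:
  assumes "open \<Omega>" "x \<in> closure \<Omega>" "0 < infdist x (frontier \<Omega>)"
  shows "x \<in> \<Omega>"
proof -
  have "x \<notin> frontier \<Omega>" using assms(3) by auto
  then show ?thesis using assms(1,2) by (simp add: frontier_def interior_open)
qed

lemma clustered_exit_arcs:
  fixes \<Omega> K :: "pt set" and J r :: real
  assumes J: "1 \<le> J" and david: "david_property \<Omega> K J" and "0 \<in> \<Omega>"
    and r: "0 < r" "18 * r < infdist 0 (frontier \<Omega>)"
  obtains n :: nat and A rep and \<eta> :: "pt \<Rightarrow> real \<Rightarrow> pt" where
    "n \<le> nat (2 * \<lceil>3 * J\<rceil> + 1) ^ 2" "ball 0 r - K \<subseteq> (\<Union>j\<in>{1..n}. A j)"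
    "\<And>j. j \<in> {1..n} \<Longrightarrow> rep j \<in> A j"
    "\<And>j x. j \<in> {1..n} \<Longrightarrow> x \<in> A j \<Longrightarrow>
       exit_arc J K r x (\<eta> x) \<and> dist (pathfinish (\<eta> x)) (pathfinish (\<eta> (rep j))) < 2 * (r / J)"
proof -
  define B where "B = ball 0 r - K"
  have "\<forall>x\<in>B. \<exists>\<eta>. exit_arc J K r x \<eta>"
    using david_exit_arc[OF J david \<open>0 \<in> \<Omega>\<close> r] unfolding B_def by blast
  then obtain \<eta> where \<eta>: "\<forall>x\<in>B. exit_arc J K r x (\<eta> x)" by (rule bchoice[THEN exE])
  define Y where "Y x = pathfinish (\<eta> x)" for x
  have "0 < r / J" using J r by simp
  obtain n A rep where n: "n \<le> nat (2 * \<lceil>3 * r / (r / J)\<rceil> + 1) ^ 2"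
    and cover: "B \<subseteq> (\<Union>j\<in>{1..n}. A j)"
    and cells: "\<And>j. j \<in> {1..n} \<Longrightarrow> A j \<subseteq> B \<and> rep j \<in> A j \<and>
      (\<forall>x\<in>A j. dist (Y x) (Y (rep j)) < 2 * (r / J))"
    by (rule grid_clusters[OF \<open>0 < r / J\<close>, of B Y "3 * r"])
      (use \<eta> in \<open>auto simp: Y_def exit_arc_def\<close>)
  have "3 * r / (r / J) = 3 * J" using r by simp
  then have "n \<le> nat (2 * \<lceil>3 * J\<rceil> + 1) ^ 2" using n by simp
  moreover have "exit_arc J K r x (\<eta> x) \<and> dist (pathfinish (\<eta> x)) (pathfinish (\<eta> (rep j))) < 2 * (r / J)"
    if "j \<in> {1..n}" "x \<in> A j" for j x
    using that \<eta> cells unfolding Y_def by blast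
  ultimately show ?thesis using that cover cells unfolding B_def by blast
qed

lemma john_cover:
  fixes \<Omega> K :: "pt set" and J r :: real
  assumes J: "1 \<le> J" and K: "closed K" "0 \<in> K" and "0 \<in> \<Omega>"
    and david: "david_property \<Omega> K J" and r: "0 < r" "18 * r < infdist 0 (frontier \<Omega>)"
  shows "\<exists>n W w. n \<le> nat (2 * \<lceil>3 * J\<rceil> + 1) ^ 2 \<and>
    ball 0 r - K \<subseteq> (\<Union>j\<in>{1..n}. closure (W j)) \<and>
    (\<forall>j\<in>{1..n}. (\<exists>x0. john_domain (W j) (3 * (3 * J^2 + 2) + 3) x0) \<and>
       W j \<subseteq> ball 0 (5 * r) - K \<and> w j \<in> sphere 0 (3 * r) \<inter> W j \<and>
       (\<forall>x\<in>W j. \<exists>\<beta>. path \<beta> \<and> pathstart \<beta> = x \<and> pathfinish \<beta> = w j \<and> path_image \<beta> \<subseteq> W j \<and>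
          path_length \<beta> \<le> ennreal (3 * (3 * J^2 + 3) * r) \<and> carrot \<beta> (3 * (3 * J^2 + 2) + 3) \<subseteq> W j))"
proof -
  obtain n A rep and \<eta> :: "pt \<Rightarrow> real \<Rightarrow> pt" where n: "n \<le> nat (2 * \<lceil>3 * J\<rceil> + 1) ^ 2"
    and cover: "ball 0 r - K \<subseteq> (\<Union>j\<in>{1..n}. A j)" and rep: "\<And>j. j \<in> {1..n} \<Longrightarrow> rep j \<in> A j"
    and cells: "\<And>j x. j \<in> {1..n} \<Longrightarrow> x \<in> A j \<Longrightarrow>
      exit_arc J K r x (\<eta> x) \<and> dist (pathfinish (\<eta> x)) (pathfinish (\<eta> (rep j))) < 2 * (r / J)"
    using clustered_exit_arcs[OF J david \<open>0 \<in> \<Omega>\<close> r] by blast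
  define w where "w j = pathfinish (\<eta> (rep j))" for j
  have "\<forall>j\<in>{1..n}. \<exists>W. carrot_domain W (3 * (3 * J^2 + 2) + 3) (3 * (3 * J^2 + 3) * r) (w j) \<and>
      W \<subseteq> ball 0 (5 * r) - K \<and> w j \<in> sphere 0 (3 * r) \<inter> W \<and> A j \<subseteq> W"
  proof
    fix j assume j: "j \<in> {1..n}"
    have w: "norm (w j) = 3 * r" "2 * r \<le> J * infdist (w j) K"
      using cells[OF j rep[OF j]] unfolding w_def exit_arc_def by auto
    obtain W where "carrot_domain W (3 * (3 * J^2 + 2) + 3) (3 * (3 * J^2 + 3) * r) (w j)"
      "W \<subseteq> ball 0 (5 * r) - K" "w j \<in> W" "A j \<subseteq> W"
      by (rule cell_carrot_domain[OF J r(1) K rep[OF j] _ w]) (use cells[OF j] in \<open>simp add: w_def\<close>)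
    then show "\<exists>W. carrot_domain W (3 * (3 * J^2 + 2) + 3) (3 * (3 * J^2 + 3) * r) (w j) \<and>
      W \<subseteq> ball 0 (5 * r) - K \<and> w j \<in> sphere 0 (3 * r) \<inter> W \<and> A j \<subseteq> W"
      using w(1) by auto
  qed
  then obtain W where W: "\<forall>j\<in>{1..n}. carrot_domain (W j) (3 * (3 * J^2 + 2) + 3) (3 * (3 * J^2 + 3) * r) (w j) \<and>
      W j \<subseteq> ball 0 (5 * r) - K \<and> w j \<in> sphere 0 (3 * r) \<inter> W j \<and> A j \<subseteq> W j"
    by (rule bchoice[THEN exE])
  have "ball 0 r - K \<subseteq> (\<Union>j\<in>{1..n}. closure (W j))" using cover W closure_subset by blast
  then show ?thesis
    using n W unfolding carrot_domain_def by (intro exI[of _ n] exI[of _ W] exI[of _ w]) blast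
qed

theorem lemma3p2:
  fixes J :: real
  assumes "J \<ge> 1"
  shows "\<exists>C N J' C2. C > 0 \<and> J' > 0 \<and> C2 > 0 \<and>
    (\<forall>(\<Omega> :: pt set) u. open \<Omega> \<and> connected \<Omega> \<and> sbv \<Omega> u \<and> MS_local_minimizer \<Omega> u \<and>
       (0::pt) \<in> closure (approx_disc \<Omega> u) - approx_disc \<Omega> u \<and>
       david_property \<Omega> (closure (approx_disc \<Omega> u)) J \<longrightarrow>
       (\<forall>r. 0 < r \<and> r < (infdist 0 (frontier \<Omega>) / 2) / 9 \<longrightarrow>
          (\<exists>n W w. n \<le> (N::nat) \<and>
             ball 0 r - closure (approx_disc \<Omega> u) \<subseteq> (\<Union>j\<in>{1..n}. closure (W j)) \<and>
             (\<forall>j\<in>{1..n}.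
                (\<exists>x0. john_domain (W j) J' x0) \<and>
                W j \<subseteq> ball 0 (C * r) - closure (approx_disc \<Omega> u) \<and>
                w j \<in> sphere 0 (3 * r) \<inter> W j \<and>
                (\<forall>x \<in> W j. \<exists>\<beta>. path \<beta> \<and> pathstart \<beta> = x \<and> pathfinish \<beta> = w j \<and>
                   path_image \<beta> \<subseteq> W j \<and> path_length \<beta> \<le> ennreal (C2 * r) \<and>
                   carrot \<beta> J' \<subseteq> W j)))))"
proof (rule exI[of _ 5], rule exI[of _ "nat (2 * \<lceil>3 * J\<rceil> + 1) ^ 2"],
    rule exI[of _ "3 * (3 * J^2 + 2) + 3"], rule exI[of _ "3 * (3 * J^2 + 3)"], intro conjI allI impI)
  fix \<Omega> :: "pt set" and u r
  assume H: "open \<Omega> \<and> connected \<Omega> \<and> sbv \<Omega> u \<and> MS_local_minimizer \<Omega> u \<and>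
      (0::pt) \<in> closure (approx_disc \<Omega> u) - approx_disc \<Omega> u \<and>
      david_property \<Omega> (closure (approx_disc \<Omega> u)) J"
    and r: "0 < r \<and> r < (infdist 0 (frontier \<Omega>) / 2) / 9"
  have "0 \<in> closure \<Omega>"
    using H closure_mono[of "approx_disc \<Omega> u" \<Omega>] unfolding approx_disc_def by blast
  moreover have "0 < infdist 0 (frontier \<Omega>)" using r by linarith
  ultimately have "0 \<in> \<Omega>" using mem_open_of_closure H by blast
  then show "\<exists>n W w. n \<le> nat (2 * \<lceil>3 * J\<rceil> + 1) ^ 2 \<and>
      ball 0 r - closure (approx_disc \<Omega> u) \<subseteq> (\<Union>j\<in>{1..n}. closure (W j)) \<and>
      (\<forall>j\<in>{1..n}. (\<exists>x0. john_domain (W j) (3 * (3 * J^2 + 2) + 3) x0) \<and>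
         W j \<subseteq> ball 0 (5 * r) - closure (approx_disc \<Omega> u) \<and> w j \<in> sphere 0 (3 * r) \<inter> W j \<and>
         (\<forall>x\<in>W j. \<exists>\<beta>. path \<beta> \<and> pathstart \<beta> = x \<and> pathfinish \<beta> = w j \<and> path_image \<beta> \<subseteq> W j \<and>
            path_length \<beta> \<le> ennreal (3 * (3 * J^2 + 3) * r) \<and>
            carrot \<beta> (3 * (3 * J^2 + 2) + 3) \<subseteq> W j))"
    using john_cover[OF assms closed_closure _ \<open>0 \<in> \<Omega>\<close>, of "approx_disc \<Omega> u" r] H r by simp
qed (use assms in \<open>simp_all add: add_pos_nonneg\<close>)

end
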